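(* Let $H\in(\tfrac12,1)$, $T>0$, and let $X^H$, $Y^H$ be centered Gaussian processes on $[0,T]$ with covariances $R^{X^H}$ and $R^{Y^H}$ defined below. There is a constant $C>0$ (depending on $H$ and $T$) such that for all $s,t\in[0,T]$, $$\mathbf E\big(|X^H_t-X^H_s|^2\big)\le C|t-s|^{1/2},\qquad \mathbf E\big(|Y^H_t-Y^H_s|^2\big)\le C|t-s|^{1/2}.$$ Consequently, $X^H$ and $Y^H$ each admit a version with Hölder continuous paths of every order $\delta\in(0,\tfrac14)$.
   Context: For $0\le s\le t$ (extended symmetrically to $s>t$): $R^{X^H}(t,s)=\frac{H}{2\sqrt{2\pi}}\int_0^s (s-a)^{2H-1}[(t+a)^{-1/2}+(t-a)^{-1/2}]da$; $R^{Y^H}(t,s)=\frac{H}{2\sqrt{2\pi}}\int_0^s (s-a)^{-1/2}[(t+a)^{2H-1}-(t-a)^{2H-1}]da$. *)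

theory Defs
  imports "HOL-Probability.Probability"
begin

definition RX :: "real \<Rightarrow> real \<Rightarrow> real \<Rightarrow> real" where
  "RX H t s = (let u = min t s; v = max t s in
     H / (2 * sqrt (2 * pi)) *
     (LBINT a=0..u. (u - a) powr (2*H - 1) * ((v + a) powr (-1/2) + (v - a) powr (-1/2))))"

definition RY :: "real \<Rightarrow> real \<Rightarrow> real \<Rightarrow> real" where
  "RY H t s = (let u = min t s; v = max t s in
     H / (2 * sqrt (2 * pi)) *
     (LBINT a=0..u. (u - a) powr (-1/2) * ((v + a) powr (2*H - 1) - (v - a) powr (2*H - 1))))"

text \<open>X is a centered Gaussian process on [0,T] with covariance R: every finite
  linear combination of the X_t (t in [0,T]) is a centered normal random variable
  with variance given by R (a degenerate normal, i.e. a.s. 0, when the variance is 0).\<close>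
definition centered_gaussian_process ::
  "'a measure \<Rightarrow> real \<Rightarrow> (real \<Rightarrow> 'a \<Rightarrow> real) \<Rightarrow> (real \<Rightarrow> real \<Rightarrow> real) \<Rightarrow> bool" where
  "centered_gaussian_process M T X R \<longleftrightarrow>
     (\<forall>t\<in>{0..T}. X t \<in> borel_measurable M) \<and>
     (\<forall>(n::nat) (ts::nat \<Rightarrow> real) (c::nat \<Rightarrow> real). (\<forall>i<n. ts i \<in> {0..T}) \<longrightarrow>
        (let Z = (\<lambda>\<omega>. \<Sum>i<n. c i * X (ts i) \<omega>);
             v = (\<Sum>i<n. \<Sum>j<n. c i * c j * R (ts i) (ts j))
         in v \<ge> 0 \<and>
            (if v = 0 then (AE \<omega> in M. Z \<omega> = 0)
             else distributed M lborel Z (\<lambda>x. ennreal (normal_density 0 (sqrt v) x)))))"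

definition is_version :: "'a measure \<Rightarrow> real \<Rightarrow> (real \<Rightarrow> 'a \<Rightarrow> real) \<Rightarrow> (real \<Rightarrow> 'a \<Rightarrow> real) \<Rightarrow> bool" where
  "is_version M T X Y \<longleftrightarrow>
     (\<forall>t\<in>{0..T}. Y t \<in> borel_measurable M \<and> (AE \<omega> in M. X t \<omega> = Y t \<omega>))"

definition holder_on :: "real \<Rightarrow> real \<Rightarrow> (real \<Rightarrow> real) \<Rightarrow> bool" where
  "holder_on T \<delta> f \<longleftrightarrow> (\<exists>K. \<forall>s\<in>{0..T}. \<forall>t\<in>{0..T}. \<bar>f t - f s\<bar> \<le> K * \<bar>t - s\<bar> powr \<delta>)"

end

theory Submission
  imports Defs
begin

text \<open>
  Write \<open>incr_var R s t = R(t,t) + R(s,s) - 2 R(s,t)\<close> for the variance of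
  the increment \<open>X\<^sub>t - X\<^sub>s\<close> of a process with covariance \<open>R\<close>.

  (1) Kernel estimates.  For \<open>R = R\<^sup>X\<close> and \<open>R = R\<^sup>Y\<close> with \<open>b = 2H - 1 \<in> (0,1)\<close> we show
  \<open>incr_var R s t \<le> C |t - s|\<^sup>1\<^sup>/\<^sup>2\<close> on \<open>[0,T]\<close>.  The defining integrals are rewritten as
  Henstock--Kurzweil integrals over \<open>[0,s]\<close>; the increment variance splits into the integral
  over \<open>[s,t]\<close> plus two differences of integrands over \<open>[0,s]\<close>, each bounded pointwise by
  elementary power inequalities and integrated explicitly.

  (2) Gaussian moments.  The increment of a centered Gaussian process is centered normal with
  variance \<open>incr_var R s t\<close>, so \<open>E (X\<^sub>t - X\<^sub>s)\<^sup>2\<^sup>k = (2k)!/(2\<^sup>k k!) (incr_var R s t)\<^sup>k\<close>.  With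
  \<open>k = 1\<close> and (1) this gives the second moment bounds; for all \<open>k\<close> it gives moment bounds
  \<open>C\<^sub>k |t - s|\<^sup>k\<^sup>/\<^sup>2\<close>.

  (3) Kolmogorov--Chentsov.  A process with \<open>E (X\<^sub>t - X\<^sub>s)\<^sup>2\<^sup>k \<le> C\<^sub>k |t - s|\<^sup>\<alpha>\<^sup>k\<close> for all \<open>k\<close> has a
  version with Hoelder paths of every order \<open>\<delta> < \<alpha>/2\<close>: a deterministic chaining lemma along
  dyadic grids (locale \<open>dyadic_chain\<close>) combined with Borel--Cantelli for the events of large
  dyadic increments (locale \<open>moment_bounded_process\<close>).  Taking \<open>\<alpha> = 1/2\<close> gives \<open>\<delta> < 1/4\<close>.
\<close>

lemma interval_integral_eq_integral_nonneg:
  fixes f :: "real \<Rightarrow> real"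
  assumes meas: "f \<in> borel_measurable borel" and int: "f integrable_on {p..q}"
    and nonneg: "\<And>x. x \<in> {p<..<q} \<Longrightarrow> 0 \<le> f x" and pq: "p \<le> q"
  shows "(LBINT x=p..q. f x) = integral {p..q} f"
proof -
  have "f absolutely_integrable_on {p<..<q}"
    by (rule nonnegative_absolutely_integrable_1)
      (use int nonneg in \<open>auto simp: integrable_on_open_interval_real\<close>)
  then have set_int: "set_integrable lborel {p<..<q} f"
    unfolding set_integrable_def
    by (subst integrable_completion[symmetric]) (use meas in auto)
  have "einterval p q = {p<..<q}" by (auto simp: einterval_def)
  then have "(LBINT x=p..q. f x) = (LBINT x:{p<..<q}. f x)"
    using pq by (simp add: interval_lebesgue_integral_def)
  also have "\<dots> = integral {p<..<q} f"
    by (rule set_borel_integral_eq_integral(2)[OF set_int])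
  finally show ?thesis by (simp add: integral_open_interval_real)
qed

text \<open>Antiderivatives of \<open>a \<mapsto> (c - a)\<^sup>g\<close> and \<open>a \<mapsto> (c + a)\<^sup>g\<close> for \<open>g > -1\<close>; the
  endpoint singularity is harmless because the primitive is continuous there.\<close>

lemma has_integral_powr_minus:
  fixes c p q g :: real
  assumes g: "g > -1" and pq: "p \<le> q" and qc: "q \<le> c"
  shows "((\<lambda>a. (c - a) powr g) has_integral ((c-p) powr (g+1) - (c-q) powr (g+1)) / (g+1)) {p..q}"
proof -
  define F where "F = (\<lambda>a. - ((c - a) powr (g+1)) / (g+1))"
  have "((\<lambda>a. (c - a) powr g) has_integral (F q - F p)) {p..q}"
  proof (rule fundamental_theorem_of_calculus_interior[OF pq])
    show "continuous_on {p..q} F" unfolding F_def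
      using qc g by (intro continuous_intros continuous_on_powr') auto
    fix x assume "x \<in> {p<..<q}"
    then have "c - x > 0" using qc by auto
    then have D: "((\<lambda>a. (c - a) powr (g+1)) has_real_derivative (g+1) * (c - x) powr (g + 1 - of_nat 1) * (-1)) (at x)"
      by (intro DERIV_fun_powr) (auto intro!: derivative_eq_intros)
    have "(F has_real_derivative ((g+1) * (c - x) powr g / (g+1))) (at x)"
      using DERIV_cdivide[OF DERIV_minus[OF D], of "g+1"] by (simp add: F_def)
    then show "(F has_vector_derivative (c - x) powr g) (at x)"
      unfolding has_real_derivative_iff_has_vector_derivative[symmetric] using g by simp
  qed
  then show ?thesis by (simp add: F_def diff_divide_distrib)
qed

lemma has_integral_powr_plus:
  fixes c p q g :: real
  assumes g: "g > -1" and pq: "p \<le> q" and pc: "0 \<le> c + p"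
  shows "((\<lambda>a. (c + a) powr g) has_integral ((c+q) powr (g+1) - (c+p) powr (g+1)) / (g+1)) {p..q}"
proof -
  define F where "F = (\<lambda>a. (c + a) powr (g+1) / (g+1))"
  have "((\<lambda>a. (c + a) powr g) has_integral (F q - F p)) {p..q}"
  proof (rule fundamental_theorem_of_calculus_interior[OF pq])
    show "continuous_on {p..q} F" unfolding F_def
      using pc g by (intro continuous_intros continuous_on_powr') auto
    fix x assume "x \<in> {p<..<q}"
    then have "c + x > 0" using pc by auto
    then have D: "((\<lambda>a. (c + a) powr (g+1)) has_real_derivative (g+1) * (c + x) powr (g + 1 - of_nat 1) * 1) (at x)"
      by (intro DERIV_fun_powr) (auto intro!: derivative_eq_intros)
    have "(F has_real_derivative ((g+1) * (c + x) powr g / (g+1))) (at x)"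
      using DERIV_cdivide[OF D, of "g+1"] by (simp add: F_def)
    then show "(F has_vector_derivative (c + x) powr g) (at x)"
      unfolding has_real_derivative_iff_has_vector_derivative[symmetric] using g by simp
  qed
  then show ?thesis by (simp add: F_def diff_divide_distrib)
qed

text \<open>Mean value bound for the concave power \<open>x \<mapsto> x\<^sup>b\<close>, \<open>0 < b < 1\<close>.\<close>

lemma powr_increment_le:
  fixes x y b :: real
  assumes "0 < x" "x \<le> y" "0 < b" "b < 1"
  shows "y powr b - x powr b \<le> (y - x) * y powr (b - 1)"
proof -
  have "x * y powr (b - 1) \<le> x * x powr (b - 1)"
    using assms by (intro mult_left_mono powr_mono2') auto
  also have "\<dots> = x powr b" using assms by (simp add: powr_mult_base)
  finally have "x * y powr (b - 1) \<le> x powr b" .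
  moreover have "y powr b = y * y powr (b - 1)" using assms by (simp add: powr_mult_base)
  ultimately show ?thesis by (simp add: algebra_simps)
qed

text \<open>Integrability and monotonicity of the integral on \<open>[p,q]\<close> only need hypotheses
  on the open interval; this is how the singular endpoints of the kernels are handled.\<close>

lemma integrable_on_dominated:
  fixes f g :: "real \<Rightarrow> real"
  assumes "f \<in> borel_measurable borel" "g integrable_on {p..q}"
    "\<And>x. x \<in> {p<..<q} \<Longrightarrow> \<bar>f x\<bar> \<le> g x"
  shows "f integrable_on {p..q}"
proof -
  have "f \<in> borel_measurable (lebesgue_on {p<..<q})"
    by (rule measurable_restrict_space1, rule measurable_completion) (use assms(1) in simp)
  then have "f integrable_on {p<..<q}"
    by (rule measurable_bounded_by_integrable_imp_integrable_real[where g=g])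
       (use assms in \<open>auto simp: integrable_on_open_interval_real\<close>)
  then show ?thesis by (simp add: integrable_on_open_interval_real)
qed

lemma integral_mono_interior:
  fixes f g :: "real \<Rightarrow> real"
  assumes "f integrable_on {p..q}" "g integrable_on {p..q}"
    "\<And>x. x \<in> {p<..<q} \<Longrightarrow> f x \<le> g x"
  shows "integral {p..q} f \<le> integral {p..q} g"
proof -
  have "integral {p<..<q} f \<le> integral {p<..<q} g"
    by (rule integral_le) (use assms in \<open>auto simp: integrable_on_open_interval_real\<close>)
  then show ?thesis by (simp add: integral_open_interval_real)
qed

definition incr_var :: "(real \<Rightarrow> real \<Rightarrow> real) \<Rightarrow> real \<Rightarrow> real \<Rightarrow> real" where
  "incr_var R s t = R t t + R s s - 2 * R s t"

lemma incr_var_bound_symmetric: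
  assumes sym: "\<And>a c. R a c = R c a"
    and le: "\<And>s t. 0 \<le> s \<Longrightarrow> s \<le> t \<Longrightarrow> t \<le> T \<Longrightarrow> incr_var R s t \<le> C * (t - s) powr (1/2)"
    and st: "s \<in> {0..T}" "t \<in> {0..T}"
  shows "incr_var R s t \<le> C * \<bar>t - s\<bar> powr (1/2)"
proof (cases "s \<le> t")
  case True
  then show ?thesis using le[of s t] st by simp
next
  case False
  then have "incr_var R t s \<le> C * (s - t) powr (1/2)" using le[of t s] st by simp
  moreover have "incr_var R t s = incr_var R s t" by (simp add: incr_var_def sym[of s t])
  ultimately show ?thesis using False by (simp add: abs_if)
qed

lemma increment_integral_split:
  fixes ktt kss kst :: "real \<Rightarrow> real"
  assumes st: "0 \<le> s" "s \<le> t"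
    and int: "ktt integrable_on {0..t}" "kss integrable_on {0..s}" "kst integrable_on {0..s}"
  shows "integral {0..t} ktt + integral {0..s} kss - 2 * integral {0..s} kst
       = integral {s..t} ktt + integral {0..s} (\<lambda>a. ktt a - kst a) + integral {0..s} (\<lambda>a. kss a - kst a)"
proof -
  have "ktt integrable_on {0..s}" by (rule integrable_on_subinterval[OF int(1)]) (use st in auto)
  then have "integral {0..s} (\<lambda>a. ktt a - kst a) = integral {0..s} ktt - integral {0..s} kst"
    "integral {0..s} (\<lambda>a. kss a - kst a) = integral {0..s} kss - integral {0..s} kst"
    using int by (simp_all add: integral_diff)
  moreover have "integral {0..t} ktt = integral {0..s} ktt + integral {s..t} ktt"
    using Henstock_Kurzweil_Integration.integral_combine[OF st int(1)] by simp
  ultimately show ?thesis by simp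
qed

lemma RX_symmetric: "RX H a c = RX H c a"
  by (simp add: RX_def min.commute max.commute)

lemma RY_symmetric: "RY H a c = RY H c a"
  by (simp add: RY_def min.commute max.commute)

definition RX_integrand :: "real \<Rightarrow> real \<Rightarrow> real \<Rightarrow> real \<Rightarrow> real" where
  "RX_integrand b u v a = (u - a) powr b * ((v + a) powr (-1/2) + (v - a) powr (-1/2))"

lemma RX_integrand_measurable[measurable]: "RX_integrand b u v \<in> borel_measurable borel"
  unfolding RX_integrand_def by measurable

lemma RX_integrand_nonneg: "0 \<le> RX_integrand b u v a"
  unfolding RX_integrand_def by simp

lemma RX_integrand_le:
  assumes "0 < a" "a < u" "u \<le> v"
  shows "RX_integrand b u v a \<le> 2 * (u - a) powr (b - 1/2)"
proof -
  have "(v + a) powr (-1/2) \<le> (u - a) powr (-1/2)" "(v - a) powr (-1/2) \<le> (u - a) powr (-1/2)"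
    using assms by (auto intro: powr_mono2')
  then have "RX_integrand b u v a \<le> (u - a) powr b * (2 * (u - a) powr (-1/2))"
    unfolding RX_integrand_def by (intro mult_left_mono) auto
  also have "\<dots> = 2 * (u - a) powr (b - 1/2)"
    using assms by (simp add: powr_add[symmetric])
  finally show ?thesis .
qed

lemma RX_integrand_integrable:
  assumes b: "0 < b" and uv: "0 \<le> u" "u \<le> v"
  shows "RX_integrand b u v integrable_on {0..u}"
proof (rule integrable_on_dominated[OF RX_integrand_measurable])
  have I: "((\<lambda>a. (u - a) powr (b - 1/2)) has_integral ((u-0) powr (b-1/2+1) - (u-u) powr (b-1/2+1)) / (b-1/2+1)) {0..u}"
    by (rule has_integral_powr_minus) (use assms in auto)
  then show "(\<lambda>a. 2 * (u - a) powr (b - 1/2)) integrable_on {0..u}"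
    using has_integral_mult_right[OF I, of 2] by (auto simp: integrable_on_def)
  fix x assume "x \<in> {0<..<u}"
  then show "\<bar>RX_integrand b u v x\<bar> \<le> 2 * (u - x) powr (b - 1/2)"
    using RX_integrand_le[of x u v b] RX_integrand_nonneg[of b u v x] uv by auto
qed

lemma RX_eq_integral:
  assumes H: "1/2 < H" and uv: "0 \<le> u" "u \<le> v"
  shows "RX H u v = H / (2 * sqrt (2 * pi)) * integral {0..u} (RX_integrand (2*H-1) u v)"
proof -
  have "RX H u v = H / (2 * sqrt (2 * pi)) * (LBINT a=0..u. RX_integrand (2*H-1) u v a)"
    using uv by (simp add: RX_def RX_integrand_def Let_def min_def max_def)
  also have "(LBINT a=0..u. RX_integrand (2*H-1) u v a) = integral {0..u} (RX_integrand (2*H-1) u v)"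
    using interval_integral_eq_integral_nonneg[of "RX_integrand (2*H-1) u v" 0 u]
      RX_integrand_integrable[of "2*H-1" u v] RX_integrand_nonneg H uv
    by (simp add: zero_ereal_def)
  finally show ?thesis .
qed

lemma RX_tail_estimate:
  assumes b: "0 < b" "b < 1" and st: "0 \<le> s" "s \<le> t" "t \<le> T"
  shows "integral {s..t} (RX_integrand b t t) \<le> 2 * T powr b / (b + 1/2) * (t - s) powr (1/2)"
proof -
  have I: "((\<lambda>a. (t - a) powr (b - 1/2)) has_integral ((t-s) powr (b-1/2+1) - (t-t) powr (b-1/2+1)) / (b-1/2+1)) {s..t}"
    by (rule has_integral_powr_minus) (use b st in auto)
  then have I': "((\<lambda>a. 2 * (t - a) powr (b - 1/2)) has_integral 2 * ((t - s) powr (b + 1/2) / (b + 1/2))) {s..t}"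
    using has_integral_mult_right[OF I, of 2] b by (simp add: add_ac)
  have "RX_integrand b t t integrable_on {s..t}"
    by (rule integrable_on_subinterval[OF RX_integrand_integrable[of b t t]]) (use b st in auto)
  then have "integral {s..t} (RX_integrand b t t) \<le> integral {s..t} (\<lambda>a. 2 * (t - a) powr (b - 1/2))"
    by (rule integral_mono_interior) (use I' RX_integrand_le[of _ t t b] st in \<open>auto simp: integrable_on_def\<close>)
  also have "\<dots> = 2 * ((t - s) powr b * (t - s) powr (1/2) / (b + 1/2))"
    using integral_unique[OF I'] st by (simp add: powr_add)
  also have "\<dots> \<le> 2 * (T powr b * (t - s) powr (1/2) / (b + 1/2))"
    using b st by (intro mult_left_mono divide_right_mono mult_right_mono powr_mono2) auto
  finally show ?thesis by simp
qed

lemma RX_shift_pointwise: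
  fixes x y b G :: real
  assumes "0 < x" "x \<le> y" "0 < b" "b < 1" "0 \<le> G" "G \<le> 2 * y powr (-1/2)"
  shows "(y powr b - x powr b) * G \<le> 2 * (y - x) powr (1/2) * x powr (b - 1)"
proof -
  have sq: "y - x = (y - x) powr (1/2) * (y - x) powr (1/2)"
    using assms by (simp add: powr_add[symmetric])
  have "(y powr b - x powr b) * G \<le> ((y - x) * y powr (b - 1)) * (2 * y powr (-1/2))"
    using assms powr_increment_le[of x y b] by (intro mult_mono) (auto simp: powr_mono2)
  also have "\<dots> \<le> ((y - x) powr (1/2) * y powr (1/2)) * y powr (b - 1) * (2 * y powr (-1/2))"
    using assms by (subst sq) (intro mult_right_mono mult_left_mono powr_mono2, auto)
  also have "\<dots> = 2 * (y - x) powr (1/2) * (y powr (1/2) * y powr (b - 1) * y powr (-1/2))"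
    by simp
  also have "y powr (1/2) * y powr (b - 1) * y powr (-1/2) = y powr (b - 1)"
    using assms by (simp add: powr_add[symmetric])
  also have "2 * (y - x) powr (1/2) * y powr (b - 1) \<le> 2 * (y - x) powr (1/2) * x powr (b - 1)"
    using assms by (intro mult_left_mono powr_mono2') auto
  finally show ?thesis .
qed

lemma RX_shift_estimate:
  assumes b: "0 < b" "b < 1" and st: "0 \<le> s" "s \<le> t" "t \<le> T"
  shows "integral {0..s} (\<lambda>a. RX_integrand b t t a - RX_integrand b s t a)
       \<le> 2 * T powr b / b * (t - s) powr (1/2)"
proof -
  have I: "((\<lambda>a. (s - a) powr (b - 1)) has_integral ((s-0) powr (b-1+1) - (s-s) powr (b-1+1)) / (b-1+1)) {0..s}"
    by (rule has_integral_powr_minus) (use b st in auto)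
  then have I': "((\<lambda>a. 2 * (t - s) powr (1/2) * (s - a) powr (b - 1)) has_integral 2 * (t - s) powr (1/2) * (s powr b / b)) {0..s}"
    using has_integral_mult_right[OF I, of "2 * (t - s) powr (1/2)"] b by simp
  have "RX_integrand b t t integrable_on {0..s}"
    by (rule integrable_on_subinterval[OF RX_integrand_integrable[of b t t]]) (use b st in auto)
  then have diff_int: "(\<lambda>a. RX_integrand b t t a - RX_integrand b s t a) integrable_on {0..s}"
    using RX_integrand_integrable[of b s t] b st by (intro integrable_diff) auto
  have "integral {0..s} (\<lambda>a. RX_integrand b t t a - RX_integrand b s t a)
      \<le> integral {0..s} (\<lambda>a. 2 * (t - s) powr (1/2) * (s - a) powr (b - 1))"
  proof (rule integral_mono_interior[OF diff_int])
    show "(\<lambda>a. 2 * (t - s) powr (1/2) * (s - a) powr (b - 1)) integrable_on {0..s}"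
      using I' by (auto simp: integrable_on_def)
    fix a assume a: "a \<in> {0<..<s}"
    define G where "G = (t + a) powr (-1/2) + (t - a) powr (-1/2)"
    have "G \<le> 2 * (t - a) powr (-1/2)"
      unfolding G_def using a st by (auto intro: powr_mono2')
    moreover have "RX_integrand b t t a - RX_integrand b s t a = ((t - a) powr b - (s - a) powr b) * G"
      by (simp add: RX_integrand_def G_def algebra_simps)
    ultimately show "RX_integrand b t t a - RX_integrand b s t a \<le> 2 * (t - s) powr (1/2) * (s - a) powr (b - 1)"
      using RX_shift_pointwise[of "s - a" "t - a" b G] a st b by (auto simp: G_def)
  qed
  also have "\<dots> = 2 * (t - s) powr (1/2) * (s powr b / b)" by (rule integral_unique[OF I'])
  also have "\<dots> \<le> 2 * (t - s) powr (1/2) * (T powr b / b)"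
    using b st by (intro mult_left_mono divide_right_mono powr_mono2) auto
  finally show ?thesis by (simp add: mult_ac)
qed

lemma inverse_sqrt_difference_integral:
  fixes s t :: real
  assumes st: "0 \<le> s" "s \<le> t"
  obtains I where "((\<lambda>a. (s + a) powr (-1/2) - (t + a) powr (-1/2) + ((s - a) powr (-1/2) - (t - a) powr (-1/2)))
      has_integral I) {0..s}" and "I \<le> 2 * (t - s) powr (1/2)"
proof -
  have I1: "((\<lambda>a. (s + a) powr (-1/2)) has_integral ((s+s) powr (-1/2+1) - (s+0) powr (-1/2+1)) / (-1/2+1)) {0..s}"
    by (rule has_integral_powr_plus) (use st in auto)
  have I2: "((\<lambda>a. (t + a) powr (-1/2)) has_integral ((t+s) powr (-1/2+1) - (t+0) powr (-1/2+1)) / (-1/2+1)) {0..s}"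
    by (rule has_integral_powr_plus) (use st in auto)
  have I3: "((\<lambda>a. (s - a) powr (-1/2)) has_integral ((s-0) powr (-1/2+1) - (s-s) powr (-1/2+1)) / (-1/2+1)) {0..s}"
    by (rule has_integral_powr_minus) (use st in auto)
  have I4: "((\<lambda>a. (t - a) powr (-1/2)) has_integral ((t-0) powr (-1/2+1) - (t-s) powr (-1/2+1)) / (-1/2+1)) {0..s}"
    by (rule has_integral_powr_minus) (use st in auto)
  have "(s+s) powr (1/2) \<le> (t+s) powr (1/2)" using st by (intro powr_mono2) auto
  then show ?thesis
    using that has_integral_add[OF has_integral_diff[OF I1 I2] has_integral_diff[OF I3 I4]] by simp
qed

lemma RX_window_estimate:
  assumes b: "0 < b" "b < 1" and st: "0 \<le> s" "s \<le> t" "t \<le> T"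
  shows "integral {0..s} (\<lambda>a. RX_integrand b s s a - RX_integrand b s t a) \<le> 2 * T powr b * (t - s) powr (1/2)"
proof -
  define D where "D = (\<lambda>a. (s + a) powr (-1/2) - (t + a) powr (-1/2) + ((s - a) powr (-1/2) - (t - a) powr (-1/2)))"
  obtain I where "(D has_integral I) {0..s}" and I_le: "I \<le> 2 * (t - s) powr (1/2)"
    using inverse_sqrt_difference_integral[OF st(1,2)] unfolding D_def by blast
  then have IT: "((\<lambda>a. T powr b * D a) has_integral T powr b * I) {0..s}"
    by (intro has_integral_mult_right)
  have diff_int: "(\<lambda>a. RX_integrand b s s a - RX_integrand b s t a) integrable_on {0..s}"
    using RX_integrand_integrable[of b s s] RX_integrand_integrable[of b s t] b st
    by (intro integrable_diff) auto
  have "integral {0..s} (\<lambda>a. RX_integrand b s s a - RX_integrand b s t a) \<le> integral {0..s} (\<lambda>a. T powr b * D a)"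
  proof (rule integral_mono_interior[OF diff_int])
    show "(\<lambda>a. T powr b * D a) integrable_on {0..s}" using IT by (auto simp: integrable_on_def)
    fix a assume a: "a \<in> {0<..<s}"
    have "(t + a) powr (-1/2) \<le> (s + a) powr (-1/2)" "(t - a) powr (-1/2) \<le> (s - a) powr (-1/2)"
      using a st by (auto intro: powr_mono2')
    then have "0 \<le> D a" by (simp add: D_def)
    moreover have "(s - a) powr b \<le> T powr b" using a st b by (intro powr_mono2) auto
    moreover have "RX_integrand b s s a - RX_integrand b s t a = (s - a) powr b * D a"
      by (simp add: RX_integrand_def D_def algebra_simps)
    ultimately show "RX_integrand b s s a - RX_integrand b s t a \<le> T powr b * D a"
      by (simp add: mult_right_mono)
  qed
  also have "\<dots> = T powr b * I" by (rule integral_unique[OF IT])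
  also have "\<dots> \<le> T powr b * (2 * (t - s) powr (1/2))" using I_le by (intro mult_left_mono) auto
  finally show ?thesis by simp
qed

lemma RX_incr_var_bound:
  assumes H: "1/2 < H" "H < 1"
  shows "\<exists>C\<ge>0. \<forall>s\<in>{0..T}. \<forall>t\<in>{0..T}. incr_var (RX H) s t \<le> C * \<bar>t - s\<bar> powr (1/2)"
proof -
  define b where "b = 2*H - 1"
  define c where "c = H / (2 * sqrt (2 * pi))"
  define C where "C = c * (2 * T powr b / (b + 1/2) + 2 * T powr b / b + 2 * T powr b)"
  have b: "0 < b" "b < 1" and c: "0 < c" using H by (auto simp: b_def c_def)
  have "incr_var (RX H) s t \<le> C * (t - s) powr (1/2)" if st: "0 \<le> s" "s \<le> t" "t \<le> T" for s t
  proof -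
    have "RX H t t = c * integral {0..t} (RX_integrand b t t)"
      "RX H s s = c * integral {0..s} (RX_integrand b s s)"
      "RX H s t = c * integral {0..s} (RX_integrand b s t)"
      using RX_eq_integral[OF H(1)] st by (auto simp: b_def c_def)
    then have "incr_var (RX H) s t = c * (integral {0..t} (RX_integrand b t t) + integral {0..s} (RX_integrand b s s)
                                     - 2 * integral {0..s} (RX_integrand b s t))"
      by (simp add: incr_var_def right_diff_distrib distrib_left)
    also have "\<dots> = c * (integral {s..t} (RX_integrand b t t)
          + integral {0..s} (\<lambda>a. RX_integrand b t t a - RX_integrand b s t a)
          + integral {0..s} (\<lambda>a. RX_integrand b s s a - RX_integrand b s t a))"
      using st b by (simp add: increment_integral_split RX_integrand_integrable)
    also have "\<dots> \<le> c * ((2 * T powr b / (b + 1/2) + 2 * T powr b / b + 2 * T powr b) * (t - s) powr (1/2))"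
      using RX_tail_estimate[OF b st] RX_shift_estimate[OF b st] RX_window_estimate[OF b st] c
      unfolding distrib_right by (intro mult_left_mono) linarith+
    finally show ?thesis by (simp add: C_def)
  qed
  moreover have "0 \<le> C" using b c by (simp add: C_def)
  ultimately show ?thesis by (blast intro: incr_var_bound_symmetric RX_symmetric)
qed

definition RY_integrand :: "real \<Rightarrow> real \<Rightarrow> real \<Rightarrow> real \<Rightarrow> real" where
  "RY_integrand b u v a = (u - a) powr (-1/2) * ((v + a) powr b - (v - a) powr b)"

lemma RY_integrand_measurable[measurable]: "RY_integrand b u v \<in> borel_measurable borel"
  unfolding RY_integrand_def by measurable

lemma RY_integrand_nonneg:
  assumes "0 \<le> a" "a \<le> v" "0 < b"
  shows "0 \<le> RY_integrand b u v a"
  unfolding RY_integrand_def using assms by (intro mult_nonneg_nonneg) (auto intro!: powr_mono2)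

lemma RY_integrand_le:
  assumes "0 < a" "a < u" "u \<le> v" "0 < b" "v \<le> T"
  shows "RY_integrand b u v a \<le> (2 * T) powr b * (u - a) powr (-1/2)"
proof -
  have "(v + a) powr b \<le> (2 * T) powr b" using assms by (intro powr_mono2) auto
  then have "(v + a) powr b - (v - a) powr b \<le> (2 * T) powr b"
    using powr_ge_zero[of "v - a" b] by linarith
  then show ?thesis
    unfolding RY_integrand_def by (subst mult.commute) (intro mult_right_mono, auto)
qed

lemma RY_integrand_integrable:
  assumes b: "0 < b" and uv: "0 \<le> u" "u \<le> v"
  shows "RY_integrand b u v integrable_on {0..u}"
proof (rule integrable_on_dominated[OF RY_integrand_measurable])
  have I: "((\<lambda>a. (u - a) powr (-1/2)) has_integral ((u-0) powr (-1/2+1) - (u-u) powr (-1/2+1)) / (-1/2+1)) {0..u}"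
    by (rule has_integral_powr_minus) (use assms in auto)
  then show "(\<lambda>a. (2 * v) powr b * (u - a) powr (-1/2)) integrable_on {0..u}"
    using has_integral_mult_right[OF I, of "(2 * v) powr b"] by (auto simp: integrable_on_def)
  fix x assume "x \<in> {0<..<u}"
  then show "\<bar>RY_integrand b u v x\<bar> \<le> (2 * v) powr b * (u - x) powr (-1/2)"
    using RY_integrand_le[of x u v b v] RY_integrand_nonneg[of x v b u] uv b by auto
qed

lemma RY_eq_integral:
  assumes H: "1/2 < H" and uv: "0 \<le> u" "u \<le> v"
  shows "RY H u v = H / (2 * sqrt (2 * pi)) * integral {0..u} (RY_integrand (2*H-1) u v)"
proof -
  have "RY H u v = H / (2 * sqrt (2 * pi)) * (LBINT a=0..u. RY_integrand (2*H-1) u v a)"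
    using uv by (simp add: RY_def RY_integrand_def Let_def min_def max_def)
  also have "(LBINT a=0..u. RY_integrand (2*H-1) u v a) = integral {0..u} (RY_integrand (2*H-1) u v)"
    using interval_integral_eq_integral_nonneg[of "RY_integrand (2*H-1) u v" 0 u]
      RY_integrand_integrable[of "2*H-1" u v] RY_integrand_nonneg[of _ v "2*H-1" u] H uv
    by (simp add: zero_ereal_def)
  finally show ?thesis .
qed

lemma RY_tail_estimate:
  assumes b: "0 < b" "b < 1" and st: "0 \<le> s" "s \<le> t" "t \<le> T"
  shows "integral {s..t} (RY_integrand b t t) \<le> 2 * (2 * T) powr b * (t - s) powr (1/2)"
proof -
  have I: "((\<lambda>a. (t - a) powr (-1/2)) has_integral ((t-s) powr (-1/2+1) - (t-t) powr (-1/2+1)) / (-1/2+1)) {s..t}"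
    by (rule has_integral_powr_minus) (use b st in auto)
  then have I': "((\<lambda>a. (2 * T) powr b * (t - a) powr (-1/2)) has_integral (2 * T) powr b * (2 * (t - s) powr (1/2))) {s..t}"
    using has_integral_mult_right[OF I, of "(2 * T) powr b"] by (simp add: mult.commute)
  have "RY_integrand b t t integrable_on {s..t}"
    by (rule integrable_on_subinterval[OF RY_integrand_integrable[of b t t]]) (use b st in auto)
  then have "integral {s..t} (RY_integrand b t t) \<le> integral {s..t} (\<lambda>a. (2 * T) powr b * (t - a) powr (-1/2))"
    by (rule integral_mono_interior)
      (use I' RY_integrand_le[of _ t t b T] st b in \<open>auto simp: integrable_on_def\<close>)
  also have "\<dots> = (2 * T) powr b * (2 * (t - s) powr (1/2))" by (rule integral_unique[OF I'])
  finally show ?thesis by simp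
qed

text \<open>Second piece: it is nonpositive, since \<open>(\<cdot>)\<^sup>-\<^sup>1\<^sup>/\<^sup>2\<close> decreases.\<close>

lemma RY_shift_estimate:
  assumes b: "0 < b" "b < 1" and st: "0 \<le> s" "s \<le> t"
  shows "integral {0..s} (\<lambda>a. RY_integrand b t t a - RY_integrand b s t a) \<le> 0"
proof -
  have "RY_integrand b t t integrable_on {0..s}"
    by (rule integrable_on_subinterval[OF RY_integrand_integrable[of b t t]]) (use b st in auto)
  then have diff_int: "(\<lambda>a. RY_integrand b t t a - RY_integrand b s t a) integrable_on {0..s}"
    using RY_integrand_integrable[of b s t] b st by (intro integrable_diff) auto
  have "integral {0..s} (\<lambda>a. RY_integrand b t t a - RY_integrand b s t a) \<le> integral {0..s} (\<lambda>a. 0)"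
  proof (rule integral_mono_interior[OF diff_int integrable_0])
    fix a assume a: "a \<in> {0<..<s}"
    have "0 \<le> (t + a) powr b - (t - a) powr b" using a st b by (auto intro!: powr_mono2)
    moreover have "(t - a) powr (-1/2) \<le> (s - a) powr (-1/2)" using a st by (intro powr_mono2') auto
    moreover have "RY_integrand b t t a - RY_integrand b s t a
        = ((t - a) powr (-1/2) - (s - a) powr (-1/2)) * ((t + a) powr b - (t - a) powr b)"
      by (simp add: RY_integrand_def algebra_simps)
    ultimately show "RY_integrand b t t a - RY_integrand b s t a \<le> 0"
      by (simp add: mult_nonpos_nonneg)
  qed
  then show ?thesis by simp
qed

text \<open>Pointwise bound behind the third piece: with \<open>x = s - a\<close>, \<open>y = t - a\<close>,
  \<open>x\<^sup>-\<^sup>1\<^sup>/\<^sup>2 (y - x) y\<^sup>b\<^sup>-\<^sup>1 \<le> (y - x)\<^sup>1\<^sup>/\<^sup>2 (x\<^sup>b\<^sup>-\<^sup>1 + T\<^sup>b\<^sup>-\<^sup>1\<^sup>/\<^sup>2 x\<^sup>-\<^sup>1\<^sup>/\<^sup>2)\<close>; the two summands cover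
  \<open>b \<le> 1/2\<close> and \<open>b > 1/2\<close>.\<close>

lemma RY_window_pointwise:
  fixes x y b T :: real
  assumes "0 < x" "x \<le> y" "y \<le> T" "0 < b" "b < 1"
  shows "x powr (-1/2) * ((y - x) * y powr (b - 1))
      \<le> (y - x) powr (1/2) * (x powr (b - 1) + T powr (b - 1/2) * x powr (-1/2))"
proof -
  have "y - x = (y - x) powr (1/2) * (y - x) powr (1/2)"
    using assms by (simp add: powr_add[symmetric])
  also have "\<dots> \<le> (y - x) powr (1/2) * y powr (1/2)"
    using assms by (intro mult_left_mono powr_mono2) auto
  finally have "x powr (-1/2) * ((y - x) * y powr (b - 1))
      \<le> x powr (-1/2) * (((y - x) powr (1/2) * y powr (1/2)) * y powr (b - 1))"
    by (intro mult_left_mono mult_right_mono) auto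
  also have "\<dots> = (y - x) powr (1/2) * (x powr (-1/2) * y powr (b - 1/2))"
    using assms by (simp add: powr_add[symmetric] mult_ac)
  also have "x powr (-1/2) * y powr (b - 1/2) \<le> x powr (b - 1) + T powr (b - 1/2) * x powr (-1/2)"
  proof (cases "b \<le> 1/2")
    case True
    have "x powr (-1/2) * y powr (b - 1/2) \<le> x powr (-1/2) * x powr (b - 1/2)"
      using True assms by (intro mult_left_mono powr_mono2') auto
    also have "\<dots> = x powr (b - 1)" using assms by (simp add: powr_add[symmetric])
    finally show ?thesis by (simp add: add_increasing2)
  next
    case False
    have "x powr (-1/2) * y powr (b - 1/2) \<le> x powr (-1/2) * T powr (b - 1/2)"
      using False assms by (intro mult_left_mono powr_mono2) auto
    then show ?thesis by (simp add: add_increasing mult.commute)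
  qed
  then have "(y - x) powr (1/2) * (x powr (-1/2) * y powr (b - 1/2))
      \<le> (y - x) powr (1/2) * (x powr (b - 1) + T powr (b - 1/2) * x powr (-1/2))"
    by (intro mult_left_mono) auto
  finally show ?thesis .
qed

text \<open>The pointwise bound for the third piece: the increment \<open>(t+a)\<^sup>b - (s+a)\<^sup>b \<ge> 0\<close> is
  dropped and \<open>(t-a)\<^sup>b - (s-a)\<^sup>b\<close> is estimated by the mean value bound.\<close>

lemma RY_window_integrand_le:
  assumes b: "0 < b" "b < 1" and a: "0 < a" "a < s" and st: "s \<le> t" "t \<le> T"
  shows "RY_integrand b s s a - RY_integrand b s t a
      \<le> (t - s) powr (1/2) * ((s - a) powr (b - 1) + T powr (b - 1/2) * (s - a) powr (-1/2))"
proof -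
  have e: "RY_integrand b s s a - RY_integrand b s t a
      = (s - a) powr (-1/2) * (((s + a) powr b - (t + a) powr b) + ((t - a) powr b - (s - a) powr b))"
    by (simp add: RY_integrand_def algebra_simps)
  have "(s + a) powr b - (t + a) powr b \<le> 0" using a st b by (simp add: powr_mono2)
  moreover have "(t - a) powr b - (s - a) powr b \<le> ((t - a) - (s - a)) * (t - a) powr (b - 1)"
    by (rule powr_increment_le) (use a st b in auto)
  ultimately have "RY_integrand b s s a - RY_integrand b s t a
      \<le> (s - a) powr (-1/2) * (((t - a) - (s - a)) * (t - a) powr (b - 1))"
    unfolding e by (intro mult_left_mono) auto
  also have "\<dots> \<le> ((t - a) - (s - a)) powr (1/2) * ((s - a) powr (b - 1) + T powr (b - 1/2) * (s - a) powr (-1/2))"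
    by (rule RY_window_pointwise) (use a st b in auto)
  finally show ?thesis by simp
qed

lemma RY_window_estimate:
  assumes b: "0 < b" "b < 1" and st: "0 \<le> s" "s \<le> t" "t \<le> T"
  shows "integral {0..s} (\<lambda>a. RY_integrand b s s a - RY_integrand b s t a)
       \<le> (T powr b / b + 2 * T powr (b - 1/2) * T powr (1/2)) * (t - s) powr (1/2)"
proof -
  define K where "K = T powr (b - 1/2)"
  define h where "h = t - s"
  have I1: "((\<lambda>a. (s - a) powr (b - 1)) has_integral ((s-0) powr (b-1+1) - (s-s) powr (b-1+1)) / (b-1+1)) {0..s}"
    by (rule has_integral_powr_minus) (use b st in auto)
  have I2: "((\<lambda>a. (s - a) powr (-1/2)) has_integral ((s-0) powr (-1/2+1) - (s-s) powr (-1/2+1)) / (-1/2+1)) {0..s}"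
    by (rule has_integral_powr_minus) (use b st in auto)
  have I: "((\<lambda>a. h powr (1/2) * ((s - a) powr (b - 1) + K * (s - a) powr (-1/2))) has_integral
             h powr (1/2) * (s powr b / b + K * (2 * s powr (1/2)))) {0..s}"
    using has_integral_mult_right[OF has_integral_add[OF I1 has_integral_mult_right[OF I2, of K]], of "h powr (1/2)"] b
    by (simp add: mult.commute)
  have diff_int: "(\<lambda>a. RY_integrand b s s a - RY_integrand b s t a) integrable_on {0..s}"
    using RY_integrand_integrable[of b s s] RY_integrand_integrable[of b s t] b st
    by (intro integrable_diff) auto
  have "integral {0..s} (\<lambda>a. RY_integrand b s s a - RY_integrand b s t a)
      \<le> integral {0..s} (\<lambda>a. h powr (1/2) * ((s - a) powr (b - 1) + K * (s - a) powr (-1/2)))"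
  proof (rule integral_mono_interior[OF diff_int])
    show "(\<lambda>a. h powr (1/2) * ((s - a) powr (b - 1) + K * (s - a) powr (-1/2))) integrable_on {0..s}"
      using I by (auto simp: integrable_on_def)
    fix a assume "a \<in> {0<..<s}"
    then show "RY_integrand b s s a - RY_integrand b s t a
        \<le> h powr (1/2) * ((s - a) powr (b - 1) + K * (s - a) powr (-1/2))"
      using RY_window_integrand_le[OF b _ _ st(2,3)] by (simp add: h_def K_def)
  qed
  also have "\<dots> = h powr (1/2) * (s powr b / b + K * (2 * s powr (1/2)))" by (rule integral_unique[OF I])
  also have "\<dots> \<le> h powr (1/2) * (T powr b / b + K * (2 * T powr (1/2)))"
    using st b by (intro mult_left_mono add_mono divide_right_mono powr_mono2)
      (auto simp: K_def)
  finally show ?thesis by (simp add: h_def K_def mult_ac)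
qed

lemma RY_incr_var_bound:
  assumes H: "1/2 < H" "H < 1"
  shows "\<exists>C\<ge>0. \<forall>s\<in>{0..T}. \<forall>t\<in>{0..T}. incr_var (RY H) s t \<le> C * \<bar>t - s\<bar> powr (1/2)"
proof -
  define b where "b = 2*H - 1"
  define c where "c = H / (2 * sqrt (2 * pi))"
  define C where "C = c * (2 * (2 * T) powr b + T powr b / b + 2 * T powr (b - 1/2) * T powr (1/2))"
  have b: "0 < b" "b < 1" and c: "0 < c" using H by (auto simp: b_def c_def)
  have "incr_var (RY H) s t \<le> C * (t - s) powr (1/2)" if st: "0 \<le> s" "s \<le> t" "t \<le> T" for s t
  proof -
    have "RY H t t = c * integral {0..t} (RY_integrand b t t)"
      "RY H s s = c * integral {0..s} (RY_integrand b s s)"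
      "RY H s t = c * integral {0..s} (RY_integrand b s t)"
      using RY_eq_integral[OF H(1)] st by (auto simp: b_def c_def)
    then have "incr_var (RY H) s t = c * (integral {0..t} (RY_integrand b t t) + integral {0..s} (RY_integrand b s s)
                                     - 2 * integral {0..s} (RY_integrand b s t))"
      by (simp add: incr_var_def right_diff_distrib distrib_left)
    also have "\<dots> = c * (integral {s..t} (RY_integrand b t t)
          + integral {0..s} (\<lambda>a. RY_integrand b t t a - RY_integrand b s t a)
          + integral {0..s} (\<lambda>a. RY_integrand b s s a - RY_integrand b s t a))"
      using st b by (simp add: increment_integral_split RY_integrand_integrable)
    also have "\<dots> \<le> c * ((2 * (2 * T) powr b + T powr b / b + 2 * T powr (b - 1/2) * T powr (1/2)) * (t - s) powr (1/2))"
      using RY_tail_estimate[OF b st] RY_shift_estimate[OF b st(1,2)] RY_window_estimate[OF b st] c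
      unfolding distrib_right by (intro mult_left_mono) linarith+
    finally show ?thesis by (simp add: C_def)
  qed
  moreover have "0 \<le> C" using b c by (simp add: C_def)
  ultimately show ?thesis by (blast intro: incr_var_bound_symmetric RY_symmetric)
qed

text \<open>The increment \<open>X\<^sub>t - X\<^sub>s\<close> of a centered Gaussian process is the linear combination
  with coefficients \<open>1, -1\<close> at the times \<open>t, s\<close>: a centered normal variable with variance
  \<open>incr_var R s t\<close> (degenerate if that variance vanishes).\<close>

lemma gaussian_increment:
  assumes cgp: "centered_gaussian_process M T X R"
    and sym: "\<And>a c. R a c = R c a" and st: "s \<in> {0..T}" "t \<in> {0..T}"
  shows "0 \<le> incr_var R s t"
    and "incr_var R s t = 0 \<Longrightarrow> AE \<omega> in M. X t \<omega> - X s \<omega> = 0"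
    and "incr_var R s t \<noteq> 0 \<Longrightarrow> distributed M lborel (\<lambda>\<omega>. X t \<omega> - X s \<omega>)
           (\<lambda>x. ennreal (normal_density 0 (sqrt (incr_var R s t)) x))"
proof -
  define ts where "ts = (\<lambda>i::nat. if i = 0 then t else s)"
  define c where "c = (\<lambda>i::nat. if i = 0 then (1::real) else -1)"
  have Z: "(\<lambda>\<omega>. \<Sum>i<2. c i * X (ts i) \<omega>) = (\<lambda>\<omega>. X t \<omega> - X s \<omega>)"
    by (auto simp: c_def ts_def numeral_2_eq_2)
  have v: "(\<Sum>i<2. \<Sum>j<2. c i * c j * R (ts i) (ts j)) = incr_var R s t"
    using sym[of s t] by (auto simp: c_def ts_def numeral_2_eq_2 incr_var_def)
  have "\<forall>i<2. ts i \<in> {0..T}" using st by (auto simp: ts_def)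
  then have "let Z = (\<lambda>\<omega>. \<Sum>i<2. c i * X (ts i) \<omega>); v = (\<Sum>i<2. \<Sum>j<2. c i * c j * R (ts i) (ts j))
         in v \<ge> 0 \<and> (if v = 0 then (AE \<omega> in M. Z \<omega> = 0)
                      else distributed M lborel Z (\<lambda>x. ennreal (normal_density 0 (sqrt v) x)))"
    using cgp unfolding centered_gaussian_process_def by blast
  then have "0 \<le> incr_var R s t \<and> (if incr_var R s t = 0 then (AE \<omega> in M. X t \<omega> - X s \<omega> = 0)
      else distributed M lborel (\<lambda>\<omega>. X t \<omega> - X s \<omega>) (\<lambda>x. ennreal (normal_density 0 (sqrt (incr_var R s t)) x)))"
    unfolding Let_def Z v .
  then show "0 \<le> incr_var R s t"
    and "incr_var R s t = 0 \<Longrightarrow> AE \<omega> in M. X t \<omega> - X s \<omega> = 0"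
    and "incr_var R s t \<noteq> 0 \<Longrightarrow> distributed M lborel (\<lambda>\<omega>. X t \<omega> - X s \<omega>)
           (\<lambda>x. ennreal (normal_density 0 (sqrt (incr_var R s t)) x))"
    by simp_all
qed

lemma (in prob_space) normal_even_moment:
  fixes Z :: "'a \<Rightarrow> real"
  assumes D: "distributed M lborel Z (\<lambda>x. ennreal (normal_density 0 \<sigma> x))" and \<sigma>: "0 < \<sigma>"
  shows "integrable M (\<lambda>\<omega>. (Z \<omega>)^(2*k))"
    and "(\<integral>\<omega>. (Z \<omega>)^(2*k) \<partial>M) = fact (2*k) / (2^k * fact k) * (\<sigma>\<^sup>2)^k"
proof -
  have nm: "has_bochner_integral lborel (\<lambda>x. normal_density 0 \<sigma> x * x ^ (2 * k))
              (fact (2 * k) / ((2 / \<sigma>\<^sup>2)^k * fact k))"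
    using normal_moment_even[OF \<sigma>, of 0 k] by simp
  then show "integrable M (\<lambda>\<omega>. (Z \<omega>)^(2*k))"
    using distributed_integrable[OF D, of "\<lambda>x. x ^ (2*k)"] by (simp add: has_bochner_integral_iff)
  have "(\<integral>\<omega>. (Z \<omega>)^(2*k) \<partial>M) = (\<integral>x. normal_density 0 \<sigma> x * x ^ (2 * k) \<partial>lborel)"
    using distributed_integral[OF D, of "\<lambda>x. x ^ (2*k)"] by simp
  also have "\<dots> = fact (2*k) / (2^k * fact k) * (\<sigma>\<^sup>2)^k"
    using has_bochner_integral_integral_eq[OF nm] \<sigma> by (simp add: power_divide)
  finally show "(\<integral>\<omega>. (Z \<omega>)^(2*k) \<partial>M) = fact (2*k) / (2^k * fact k) * (\<sigma>\<^sup>2)^k" .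
qed

lemma gaussian_increment_moment:
  assumes P: "prob_space M" and cgp: "centered_gaussian_process M T X R"
    and sym: "\<And>a c. R a c = R c a" and st: "s \<in> {0..T}" "t \<in> {0..T}"
  shows "integrable M (\<lambda>\<omega>. (X t \<omega> - X s \<omega>)^(2*k))"
    and "(\<integral>\<omega>. (X t \<omega> - X s \<omega>)^(2*k) \<partial>M) = fact (2*k) / (2^k * fact k) * incr_var R s t ^ k"
proof -
  interpret prob_space M by (rule P)
  define v where "v = incr_var R s t"
  have meas: "(\<lambda>\<omega>. X t \<omega> - X s \<omega>) \<in> borel_measurable M"
    using cgp st unfolding centered_gaussian_process_def by (auto intro!: borel_measurable_diff)
  have "integrable M (\<lambda>\<omega>. (X t \<omega> - X s \<omega>)^(2*k)) \<and>
        (\<integral>\<omega>. (X t \<omega> - X s \<omega>)^(2*k) \<partial>M) = fact (2*k) / (2^k * fact k) * v^k"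
  proof (cases "k = 0")
    case True
    then show ?thesis by (simp add: prob_space)
  next
    case k: False
    show ?thesis
    proof (cases "v = 0")
      case True
      then have ae: "AE \<omega> in M. (X t \<omega> - X s \<omega>)^(2*k) = 0"
        using gaussian_increment(2)[OF cgp sym st] k unfolding v_def by (auto elim: AE_mp)
      have "integrable M (\<lambda>\<omega>. (X t \<omega> - X s \<omega>)^(2*k))"
        using integrable_cong_AE[OF _ _ ae] meas by simp
      moreover have "(\<integral>\<omega>. (X t \<omega> - X s \<omega>)^(2*k) \<partial>M) = 0"
        using integral_cong_AE[OF _ _ ae] meas by simp
      ultimately show ?thesis using True k by simp
    next
      case False
      then have "0 < v" using gaussian_increment(1)[OF cgp sym st] by (simp add: v_def)
      moreover have "distributed M lborel (\<lambda>\<omega>. X t \<omega> - X s \<omega>) (\<lambda>x. ennreal (normal_density 0 (sqrt v) x))"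
        using gaussian_increment(3)[OF cgp sym st] False by (simp add: v_def)
      ultimately show ?thesis using normal_even_moment[of _ "sqrt v" k] by simp
    qed
  qed
  then show "integrable M (\<lambda>\<omega>. (X t \<omega> - X s \<omega>)^(2*k))"
    and "(\<integral>\<omega>. (X t \<omega> - X s \<omega>)^(2*k) \<partial>M) = fact (2*k) / (2^k * fact k) * incr_var R s t ^ k"
    by (auto simp: v_def)
qed

definition dyadic_floor :: "real \<Rightarrow> nat \<Rightarrow> real \<Rightarrow> real" where
  "dyadic_floor T n t = T * of_int \<lfloor>2^n * t / T\<rfloor> / 2^n"

lemma dyadic_index_bounds:
  fixes T t :: real
  assumes "T > 0" "t \<in> {0..T}"
  shows "0 \<le> \<lfloor>2^n * t / T\<rfloor>" "\<lfloor>2^n * t / T\<rfloor> \<le> 2^n"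
proof -
  show "0 \<le> \<lfloor>2^n * t / T\<rfloor>" using assms by simp
  have "2^n * t / T \<le> 2^n" using assms by (simp add: divide_le_eq)
  then have "\<lfloor>2^n * t / T\<rfloor> \<le> \<lfloor>(2::real)^n\<rfloor>" by (rule floor_mono)
  then show "\<lfloor>2^n * t / T\<rfloor> \<le> 2^n" by simp
qed

lemma dyadic_floor_approx:
  assumes T: "T > 0" and t: "t \<in> {0..T}"
  shows "dyadic_floor T n t \<in> {0..T}" "\<bar>dyadic_floor T n t - t\<bar> \<le> T / 2^n"
proof -
  define x where "x = 2^n * t / T"
  have k: "0 \<le> \<lfloor>x\<rfloor>" "\<lfloor>x\<rfloor> \<le> 2^n"
    using dyadic_index_bounds[OF T t, of n] by (auto simp: x_def)
  then have k2: "of_int \<lfloor>x\<rfloor> \<le> (2::real)^n"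
    by (metis of_int_le_iff of_int_numeral of_int_power)
  have "T * of_int \<lfloor>x\<rfloor> \<le> T * 2^n" using k2 T by (intro mult_left_mono) auto
  then show "dyadic_floor T n t \<in> {0..T}"
    using k T by (simp add: dyadic_floor_def x_def pos_divide_le_eq)
  have "t - dyadic_floor T n t = T * (x - of_int \<lfloor>x\<rfloor>) / 2^n"
    using T by (simp add: dyadic_floor_def x_def field_simps)
  moreover have "0 \<le> x - of_int \<lfloor>x\<rfloor>" "x - of_int \<lfloor>x\<rfloor> \<le> 1" by linarith+
  then have "0 \<le> T * (x - of_int \<lfloor>x\<rfloor>)" "T * (x - of_int \<lfloor>x\<rfloor>) \<le> T * 1"
    using T by (simp_all add: mult_left_mono)
  ultimately have "0 \<le> t - dyadic_floor T n t" "t - dyadic_floor T n t \<le> T / 2^n"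
    by (simp_all add: divide_right_mono)
  then show "\<bar>dyadic_floor T n t - t\<bar> \<le> T / 2^n" by simp
qed

lemma floor_double_cases: "\<lfloor>2 * x\<rfloor> = 2 * \<lfloor>x\<rfloor> \<or> \<lfloor>2 * x\<rfloor> = 2 * \<lfloor>x\<rfloor> + 1" for x :: real
proof -
  have "of_int \<lfloor>x\<rfloor> \<le> x" "x < of_int \<lfloor>x\<rfloor> + 1" "of_int \<lfloor>2*x\<rfloor> \<le> 2*x" "2*x < of_int \<lfloor>2*x\<rfloor> + 1"
    by linarith+
  then show ?thesis by linarith
qed

lemma dyadic_grid_point:
  fixes T :: real
  assumes T: "T > 0" and i: "i < (2::nat)^n"
  shows "T * real i / 2^n \<in> {0..T}" "T * (real i + 1) / 2^n \<in> {0..T}"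
proof -
  have i1: "real i + 1 \<le> 2^n"
    using i by (metis of_nat_Suc of_nat_le_iff of_nat_numeral of_nat_power Suc_leI add.commute)
  then have "T * (real i + 1) \<le> T * 2^n" "T * real i \<le> T * 2^n"
    using T i by (auto intro!: mult_left_mono)
  then show "T * real i / 2^n \<in> {0..T}" "T * (real i + 1) / 2^n \<in> {0..T}"
    using T by (auto simp: pos_divide_le_eq)
qed

lemma dyadic_scale:
  fixes r T :: real
  assumes "0 < r" "r \<le> T"
  obtains m where "T / 2^(Suc m) < r" "r \<le> T / 2^m"
proof -
  obtain n where "T / r < 2^n" using real_arch_pow[of 2 "T / r"] by auto
  then have "\<exists>n. T / 2^n < r" using assms by (auto simp: field_simps)
  then obtain n0 where n0: "T / 2^n0 < r" "\<forall>k<n0. \<not> T / 2^k < r"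
    using exists_least_iff[of "\<lambda>n. T / 2^n < r"] by auto
  then have "n0 \<noteq> 0" using assms by (auto intro: Nat.gr0I)
  then obtain m where "n0 = Suc m" by (cases n0) auto
  then show ?thesis using n0 that by auto
qed

text \<open>If consecutive values of \<open>f\<close> on the level-\<open>n\<close> dyadic grid
  differ by at most \<open>q\<^sup>n\<close> for all \<open>n \<ge> N\<close> (\<open>0 < q < 1\<close>), then \<open>f\<close> evaluated along the
  dyadic approximations of any \<open>t\<close> converges, and the limit is Hoelder continuous with
  exponent \<open>\<gamma>\<close>, where \<open>q = 2\<^sup>-\<^sup>\<gamma>\<close>.\<close>

locale dyadic_chain =
  fixes f :: "real \<Rightarrow> real" and T q :: real and N :: nat
  assumes T: "T > 0" and q: "0 < q" "q < 1"
    and small_steps: "\<And>n i. n \<ge> N \<Longrightarrow> i < (2::nat)^n \<Longrightarrow>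
                        \<bar>f (T * (real i + 1) / 2^n) - f (T * real i / 2^n)\<bar> \<le> q^n"
begin

lemma neighbour_increment:
  assumes "n \<ge> N" "0 \<le> k" "j = k \<or> j = k + 1" "j \<le> 2^n"
  shows "\<bar>f (T * of_int j / 2^n) - f (T * of_int k / 2^n)\<bar> \<le> q^n"
  using assms(3)
proof
  assume "j = k" then show ?thesis using q by simp
next
  assume j: "j = k + 1"
  have "int (nat k) < 2^n" using assms j by simp
  then have "nat k < 2^n" by (metis of_nat_less_iff of_nat_numeral of_nat_power)
  then show ?thesis using small_steps[OF assms(1), of "nat k"] assms(2) j by simp
qed

lemma refinement_increment:
  assumes "n \<ge> N" "t \<in> {0..T}"
  shows "\<bar>f (dyadic_floor T (Suc n) t) - f (dyadic_floor T n t)\<bar> \<le> q^(Suc n)"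
proof -
  define k where "k = \<lfloor>2^n * t / T\<rfloor>"
  define j where "j = \<lfloor>2^(Suc n) * t / T\<rfloor>"
  have "j = \<lfloor>2 * (2^n * t / T)\<rfloor>" unfolding j_def by (simp add: mult_ac)
  then have jk: "j = 2*k \<or> j = 2*k + 1"
    using floor_double_cases[of "2^n * t / T"] unfolding k_def by simp
  have k0: "0 \<le> k" using dyadic_index_bounds[OF T assms(2)] by (simp add: k_def)
  have jb: "j \<le> 2^(Suc n)" using dyadic_index_bounds[OF T assms(2), of "Suc n"] by (simp add: j_def)
  have "dyadic_floor T n t = T * of_int (2*k) / 2^(Suc n)"
    "dyadic_floor T (Suc n) t = T * of_int j / 2^(Suc n)" by (simp_all add: dyadic_floor_def k_def j_def)
  then show ?thesis by (simp only:) (rule neighbour_increment, use assms k0 jk jb in auto)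
qed

definition chain_limit :: "real \<Rightarrow> real" where
  "chain_limit t = lim (\<lambda>n. f (dyadic_floor T n t))"

text \<open>The approximations converge geometrically: telescoping the refinement steps.\<close>

lemma chain_limit_convergence:
  assumes t: "t \<in> {0..T}"
  shows "(\<lambda>n. f (dyadic_floor T n t)) \<longlonglongrightarrow> chain_limit t"
    and "\<And>n. n \<ge> N \<Longrightarrow> \<bar>chain_limit t - f (dyadic_floor T n t)\<bar> \<le> q^n / (1 - q)"
proof -
  define a where "a j = f (dyadic_floor T (Suc j) t) - f (dyadic_floor T j t)" for j
  have ab: "\<bar>a j\<bar> \<le> q^(Suc j)" if "j \<ge> N" for j
    using refinement_increment[OF that t] by (simp add: a_def)
  have "summable (\<lambda>j. q^(Suc j))" using q by (simp add: summable_geometric)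
  then have sa: "summable a" by (rule summable_comparison_test'[where N=N]) (use ab in auto)
  have tel: "f (dyadic_floor T n t) = f (dyadic_floor T 0 t) + (\<Sum>j<n. a j)" for n
    unfolding a_def by (subst sum_lessThan_telescope[where f="\<lambda>j. f (dyadic_floor T j t)"]) simp
  have "(\<lambda>n. f (dyadic_floor T 0 t) + (\<Sum>j<n. a j)) \<longlonglongrightarrow> f (dyadic_floor T 0 t) + suminf a"
    by (intro tendsto_add tendsto_const summable_LIMSEQ[OF sa])
  then have L: "(\<lambda>n. f (dyadic_floor T n t)) \<longlonglongrightarrow> f (dyadic_floor T 0 t) + suminf a"
    unfolding tel[symmetric] .
  then have lim: "chain_limit t = f (dyadic_floor T 0 t) + suminf a"
    unfolding chain_limit_def by (rule limI)
  then show "(\<lambda>n. f (dyadic_floor T n t)) \<longlonglongrightarrow> chain_limit t" using L by simp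
  fix n assume n: "n \<ge> N"
  have "chain_limit t - f (dyadic_floor T n t) = (\<Sum>j. a (j + n))"
    using lim tel[of n] suminf_split_initial_segment[OF sa, of n] by simp
  moreover have "\<bar>\<Sum>j. a (j + n)\<bar> \<le> (\<Sum>j. q^(Suc n) * q^j)"
  proof -
    have sb: "summable (\<lambda>j. q^(Suc n) * q^j)" using q by (intro summable_mult summable_geometric) simp
    have bnd: "\<bar>a (j + n)\<bar> \<le> q^(Suc n) * q^j" for j
      using ab[of "j + n"] n by (simp add: power_add mult_ac)
    have "summable (\<lambda>j. \<bar>a (j + n)\<bar>)" by (rule summable_comparison_test'[OF sb]) (use bnd in auto)
    then have "\<bar>\<Sum>j. a (j + n)\<bar> \<le> (\<Sum>j. \<bar>a (j + n)\<bar>)" by (rule summable_rabs)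
    also have "\<dots> \<le> (\<Sum>j. q^(Suc n) * q^j)"
      by (rule suminf_le) (use bnd sb \<open>summable (\<lambda>j. \<bar>a (j + n)\<bar>)\<close> in auto)
    finally show ?thesis .
  qed
  moreover have "(\<Sum>j. q^(Suc n) * q^j) = q^(Suc n) / (1 - q)"
    using q by (simp add: suminf_mult summable_geometric suminf_geometric)
  moreover have "q^(Suc n) / (1 - q) \<le> q^n / (1 - q)"
    using q by (intro divide_right_mono) (auto simp: mult_left_le_one_le)
  ultimately show "\<bar>chain_limit t - f (dyadic_floor T n t)\<bar> \<le> q^n / (1 - q)" by linarith
qed


lemma nearby_floor_increment:
  assumes m: "m \<ge> N" and st: "s \<in> {0..T}" "t \<in> {0..T}" "s \<le> t" "t - s \<le> T / 2^m"
  shows "\<bar>f (dyadic_floor T m t) - f (dyadic_floor T m s)\<bar> \<le> q^m"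
proof -
  define ks where "ks = \<lfloor>2^m * s / T\<rfloor>"
  define kt where "kt = \<lfloor>2^m * t / T\<rfloor>"
  have "2^m * s / T \<le> 2^m * t / T" using st T by (simp add: divide_right_mono)
  then have 1: "ks \<le> kt" unfolding ks_def kt_def by (rule floor_mono)
  have "2^m * (t - s) \<le> 2^m * (T / 2^m)" using st by (intro mult_left_mono) auto
  then have "2^m * t / T \<le> 2^m * s / T + 1" using T by (simp add: field_simps)
  then have "kt \<le> \<lfloor>2^m * s / T + 1\<rfloor>" unfolding kt_def by (rule floor_mono)
  then have 2: "kt \<le> ks + 1" by (simp add: ks_def)
  have "0 \<le> ks" "kt \<le> 2^m"
    using dyadic_index_bounds[OF T st(1)] dyadic_index_bounds[OF T st(2)] by (simp_all add: ks_def kt_def)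
  then have "\<bar>f (T * of_int kt / 2^m) - f (T * of_int ks / 2^m)\<bar> \<le> q^m"
    by (intro neighbour_increment) (use m 1 2 in auto)
  then show ?thesis by (simp add: dyadic_floor_def ks_def kt_def)
qed

lemma chain_limit_increment:
  assumes m: "m \<ge> N" and st: "s \<in> {0..T}" "t \<in> {0..T}" "\<bar>t - s\<bar> \<le> T / 2^m"
  shows "\<bar>chain_limit t - chain_limit s\<bar> \<le> (1 + 2 / (1 - q)) * q^m"
proof -
  have ordered: "\<bar>chain_limit t - chain_limit s\<bar> \<le> (1 + 2 / (1 - q)) * q^m"
    if "s \<in> {0..T}" "t \<in> {0..T}" "s \<le> t" "t - s \<le> T / 2^m" for s t
  proof -
    have "\<bar>f (dyadic_floor T m t) - f (dyadic_floor T m s)\<bar> \<le> q^m"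
      by (rule nearby_floor_increment) (use m that in auto)
    moreover have "\<bar>chain_limit t - f (dyadic_floor T m t)\<bar> \<le> q^m / (1 - q)"
      "\<bar>chain_limit s - f (dyadic_floor T m s)\<bar> \<le> q^m / (1 - q)"
      using chain_limit_convergence(2) m that by auto
    ultimately have "\<bar>chain_limit t - chain_limit s\<bar> \<le> q^m + 2 * (q^m / (1 - q))" by linarith
    then show ?thesis by (simp add: algebra_simps)
  qed
  show ?thesis
  proof (cases "s \<le> t")
    case True then show ?thesis using ordered[of s t] st by auto
  next
    case False then show ?thesis using ordered[of t s] st by (auto simp: abs_minus_commute)
  qed
qed

text \<open>The limit is bounded, by its values on the level-\<open>N\<close> grid plus the tail.\<close>

definition chain_limit_bound :: real where
  "chain_limit_bound = (\<Sum>i\<le>(2::nat)^N. \<bar>f (T * real i / 2^N)\<bar>) + q^N / (1 - q)"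

lemma chain_limit_bounded:
  assumes t: "t \<in> {0..T}"
  shows "\<bar>chain_limit t\<bar> \<le> chain_limit_bound"
proof -
  define i where "i = nat \<lfloor>2^N * t / T\<rfloor>"
  have "i \<le> 2^N" using dyadic_index_bounds[OF T t, of N] unfolding i_def
    by (metis nat_le_iff of_nat_numeral of_nat_power)
  moreover have "dyadic_floor T N t = T * real i / 2^N"
    using dyadic_index_bounds[OF T t, of N] by (simp add: dyadic_floor_def i_def)
  ultimately have "\<bar>f (dyadic_floor T N t)\<bar> \<le> (\<Sum>i\<le>(2::nat)^N. \<bar>f (T * real i / 2^N)\<bar>)"
    using member_le_sum[of i "{..(2::nat)^N}" "\<lambda>i. \<bar>f (T * real i / 2^N)\<bar>"] by auto
  moreover have "\<bar>chain_limit t - f (dyadic_floor T N t)\<bar> \<le> q^N / (1 - q)"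
    by (rule chain_limit_convergence(2)[OF t]) simp
  ultimately show ?thesis unfolding chain_limit_bound_def by linarith
qed

text \<open>Hoelder bound of the limit at distances \<open>r \<in> (T 2\<^sup>-\<^sup>m\<^sup>-\<^sup>1, T 2\<^sup>-\<^sup>m]\<close> with \<open>m \<ge> N\<close>: there
  \<open>q\<^sup>m = 2\<^sup>-\<^sup>\<gamma>\<^sup>m \<le> (2r/T)\<^sup>\<gamma>\<close>.\<close>

lemma chain_limit_fine_scale:
  assumes \<gamma>: "0 < \<gamma>" "q = (1/2) powr \<gamma>" and m: "m \<ge> N"
    and st: "s \<in> {0..T}" "t \<in> {0..T}" and r: "T / 2^(Suc m) < \<bar>t - s\<bar>" "\<bar>t - s\<bar> \<le> T / 2^m"
  shows "\<bar>chain_limit t - chain_limit s\<bar> \<le> (1 + 2 / (1 - q)) * (2 / T) powr \<gamma> * \<bar>t - s\<bar> powr \<gamma>"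
proof -
  have "q^m = ((1/2)^m) powr \<gamma>" using \<gamma> by (simp add: powr_realpow[symmetric] powr_powr mult.commute)
  also have "\<dots> \<le> (2 * \<bar>t - s\<bar> / T) powr \<gamma>"
  proof (rule powr_mono2)
    have "(1/2::real)^m = 2 * (T / 2^(Suc m)) / T" using T by (simp add: power_one_over)
    also have "\<dots> \<le> 2 * \<bar>t - s\<bar> / T" using r(1) T by (intro divide_right_mono mult_left_mono) auto
    finally show "(1/2::real)^m \<le> 2 * \<bar>t - s\<bar> / T" .
  qed (use \<gamma> in auto)
  also have "\<dots> = (2 / T) powr \<gamma> * \<bar>t - s\<bar> powr \<gamma>" using T by (simp add: powr_mult[symmetric])
  finally have "(1 + 2 / (1 - q)) * q^m \<le> (1 + 2 / (1 - q)) * ((2 / T) powr \<gamma> * \<bar>t - s\<bar> powr \<gamma>)"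
    using q by (intro mult_left_mono) auto
  moreover have "\<bar>chain_limit t - chain_limit s\<bar> \<le> (1 + 2 / (1 - q)) * q^m"
    by (rule chain_limit_increment[OF m st r(2)])
  ultimately show ?thesis by (simp add: mult_ac)
qed

text \<open>Hoelder bound of the limit at distances above \<open>T 2\<^sup>-\<^sup>N\<close>, from boundedness.\<close>

lemma chain_limit_coarse_scale:
  assumes \<gamma>: "0 < \<gamma>" and st: "s \<in> {0..T}" "t \<in> {0..T}" and r: "T / 2^N < \<bar>t - s\<bar>"
  shows "\<bar>chain_limit t - chain_limit s\<bar> \<le> 2 * chain_limit_bound * (2^N / T) powr \<gamma> * \<bar>t - s\<bar> powr \<gamma>"
proof -
  have "1 \<le> 2^N * \<bar>t - s\<bar> / T" using r T by (simp add: field_simps)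
  then have "1 \<le> (2^N * \<bar>t - s\<bar> / T) powr \<gamma>" using \<gamma> by (simp add: ge_one_powr_ge_zero)
  also have "\<dots> = (2^N / T) powr \<gamma> * \<bar>t - s\<bar> powr \<gamma>" using T by (simp add: powr_mult[symmetric])
  moreover have "0 \<le> chain_limit_bound" using chain_limit_bounded[OF st(1)] by linarith
  ultimately have "2 * chain_limit_bound \<le> 2 * chain_limit_bound * ((2^N / T) powr \<gamma> * \<bar>t - s\<bar> powr \<gamma>)"
    using mult_left_mono[of 1 _ "2 * chain_limit_bound"] by simp
  moreover have "\<bar>chain_limit t - chain_limit s\<bar> \<le> 2 * chain_limit_bound"
    using chain_limit_bounded[OF st(1)] chain_limit_bounded[OF st(2)] by linarith
  ultimately show ?thesis by (simp add: mult_ac)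
qed

text \<open>Hoelder continuity of the limit: every distance \<open>0 < r \<le> T\<close> falls into one of the two
  regimes above.\<close>

lemma chain_limit_holder:
  assumes \<gamma>: "0 < \<gamma>" "q = (1/2) powr \<gamma>"
  shows "\<exists>K. \<forall>s\<in>{0..T}. \<forall>t\<in>{0..T}. \<bar>chain_limit t - chain_limit s\<bar> \<le> K * \<bar>t - s\<bar> powr \<gamma>"
proof -
  define K1 where "K1 = (1 + 2 / (1 - q)) * (2 / T) powr \<gamma>"
  define K2 where "K2 = 2 * chain_limit_bound * (2^N / T) powr \<gamma>"
  have "0 \<le> K1" "0 \<le> K2"
    using q chain_limit_bounded[of 0] T by (auto simp: K1_def K2_def)
  have main: "\<bar>chain_limit t - chain_limit s\<bar> \<le> (K1 + K2) * \<bar>t - s\<bar> powr \<gamma>"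
    if st: "s \<in> {0..T}" "t \<in> {0..T}" and "t \<noteq> s" for s t
  proof -
    have "0 < \<bar>t - s\<bar>" "\<bar>t - s\<bar> \<le> T" using st \<open>t \<noteq> s\<close> by auto
    then obtain m where m: "T / 2^(Suc m) < \<bar>t - s\<bar>" "\<bar>t - s\<bar> \<le> T / 2^m"
      using dyadic_scale by blast
    show ?thesis
    proof (cases "m \<ge> N")
      case True
      then show ?thesis using chain_limit_fine_scale[OF \<gamma> True st m] \<open>0 \<le> K2\<close>
        unfolding K1_def by (simp add: distrib_right add_increasing2)
    next
      case False
      then have "T / 2^N \<le> T / 2^(Suc m)" using T by (intro divide_left_mono power_increasing) auto
      then show ?thesis using chain_limit_coarse_scale[OF \<gamma>(1) st] m(1) \<open>0 \<le> K1\<close>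
        unfolding K2_def by (simp add: distrib_right add_increasing)
    qed
  qed
  show ?thesis
  proof (intro exI[of _ "K1 + K2"] ballI)
    fix s t assume "s \<in> {0..T}" "t \<in> {0..T}"
    then show "\<bar>chain_limit t - chain_limit s\<bar> \<le> (K1 + K2) * \<bar>t - s\<bar> powr \<gamma>"
      using main by (cases "t = s") auto
  qed
qed

end

lemma holder_on_smaller_exponent:
  fixes f :: "real \<Rightarrow> real"
  assumes T: "T > 0" and \<delta>: "0 < \<delta>" "\<delta> \<le> \<gamma>"
    and H: "\<forall>s\<in>{0..T}. \<forall>t\<in>{0..T}. \<bar>f t - f s\<bar> \<le> K * \<bar>t - s\<bar> powr \<gamma>"
  shows "holder_on T \<delta> f"
  unfolding holder_on_def
proof (intro exI ballI)
  fix s t assume st: "s \<in> {0..T}" "t \<in> {0..T}"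
  show "\<bar>f t - f s\<bar> \<le> (max K 0 * T powr (\<gamma> - \<delta>)) * \<bar>t - s\<bar> powr \<delta>"
  proof (cases "t = s")
    case True then show ?thesis by simp
  next
    case False
    then have r: "0 < \<bar>t - s\<bar>" "\<bar>t - s\<bar> \<le> T" using st by auto
    have "\<bar>t - s\<bar> powr \<gamma> = \<bar>t - s\<bar> powr (\<gamma> - \<delta>) * \<bar>t - s\<bar> powr \<delta>"
      using r by (simp add: powr_add[symmetric])
    also have "\<dots> \<le> T powr (\<gamma> - \<delta>) * \<bar>t - s\<bar> powr \<delta>"
      using r \<delta> by (intro mult_right_mono powr_mono2) auto
    finally have "max K 0 * \<bar>t - s\<bar> powr \<gamma> \<le> max K 0 * (T powr (\<gamma> - \<delta>) * \<bar>t - s\<bar> powr \<delta>)"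
      by (intro mult_left_mono) auto
    moreover have "\<bar>f t - f s\<bar> \<le> max K 0 * \<bar>t - s\<bar> powr \<gamma>"
      using H st by (meson max.cobounded1 mult_right_mono order_trans powr_ge_zero)
    ultimately show ?thesis by (simp add: mult_ac)
  qed
qed

lemma powr_dyadic_scale:
  fixes T \<alpha> :: real
  assumes T: "T > 0"
  shows "(T / 2^n) powr \<alpha> = T powr \<alpha> / 2 powr (\<alpha> * n)"
proof -
  have "(2::real)^n = 2 powr n" by (simp add: powr_realpow)
  then show ?thesis using T by (simp add: powr_divide powr_powr mult.commute)
qed

text \<open>With \<open>k\<close> moments and threshold \<open>2\<^sup>-\<^sup>\<gamma>\<^sup>n\<close>, \<open>\<gamma> = \<alpha>/2 - 1/k\<close>, the union bound over the
  \<open>2\<^sup>n\<close> grid intervals of level \<open>n\<close> is \<open>T\<^sup>\<alpha>\<^sup>k 2\<^sup>-\<^sup>n\<close>.\<close>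

lemma grid_union_bound_arithmetic:
  fixes T \<alpha> :: real and k n :: nat
  assumes T: "T > 0" and k: "k > 0"
  shows "2^n * ((T / 2^n) powr \<alpha>)^k / (2 powr (- (\<alpha>/2 - 1/k) * n))^(2*k) = T powr (\<alpha> * k) * (1/2)^n"
proof -
  have "((T / 2^n) powr \<alpha>)^k = T powr (\<alpha> * k) / 2 powr (\<alpha> * k * n)"
    unfolding powr_dyadic_scale[OF T] using T by (simp add: power_divide powr_power mult_ac)
  moreover have "(2 powr (- (\<alpha>/2 - 1/k) * n))^(2*k) = 2 powr (real (2*k) * (- (\<alpha>/2 - 1/k) * n))"
    by (simp add: powr_power)
  moreover have "real (2*k) * (- (\<alpha>/2 - 1/k) * n) = - (\<alpha> * k * n - 2 * n)"
    using k by (simp add: field_simps)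
  ultimately have "2^n * ((T / 2^n) powr \<alpha>)^k / (2 powr (- (\<alpha>/2 - 1/k) * n))^(2*k)
      = T powr (\<alpha> * k) * (2 powr n / (2 powr (\<alpha> * k * n) * 2 powr (- (\<alpha> * k * n - 2 * n))))"
    by (simp add: powr_realpow)
  also have "2 powr n / (2 powr (\<alpha> * k * n) * 2 powr (- (\<alpha> * k * n - 2 * n))) = 2 powr (- real n)"
    by (simp add: powr_add[symmetric] powr_diff[symmetric])
  also have "(2::real) powr (- real n) = (1/2)^n"
    by (simp add: powr_minus powr_realpow power_one_over inverse_eq_divide)
  finally show ?thesis .
qed

text \<open>With one moment and threshold \<open>2\<^sup>-\<^sup>\<alpha>\<^sup>n\<^sup>/\<^sup>4\<close>, the tail bound at level \<open>n\<close> is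
  \<open>T\<^sup>\<alpha> 2\<^sup>-\<^sup>\<alpha>\<^sup>n\<^sup>/\<^sup>2\<close>.\<close>

lemma version_tail_arithmetic:
  fixes T \<alpha> :: real and n :: nat
  assumes T: "T > 0"
  shows "(T / 2^n) powr \<alpha> / (2 powr (- (\<alpha>/4) * n))^2 = T powr \<alpha> * (2 powr (- (\<alpha>/2)))^n"
proof -
  have "(2 powr (- (\<alpha>/4) * n))^2 = 2 powr (- (\<alpha>/2) * n)" by (simp add: powr_power mult_ac)
  moreover have "(2 powr (- (\<alpha>/2)))^n = 2 powr (- (\<alpha>/2) * n)" by (simp add: powr_power mult_ac)
  ultimately show ?thesis
    unfolding powr_dyadic_scale[OF T] by (simp add: powr_add[symmetric] powr_diff[symmetric] divide_simps)
qed

lemma (in prob_space) even_moment_tail_bound: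
  fixes Z :: "'a \<Rightarrow> real"
  assumes Z: "Z \<in> borel_measurable M" and int: "integrable M (\<lambda>\<omega>. (Z \<omega>)^(2*k))" and a: "0 < a"
  shows "measure M {\<omega>\<in>space M. a < \<bar>Z \<omega>\<bar>} \<le> (\<integral>\<omega>. (Z \<omega>)^(2*k) \<partial>M) / a^(2*k)"
proof -
  have "{\<omega>\<in>space M. a < \<bar>Z \<omega>\<bar>} \<subseteq> {\<omega>\<in>space M. (Z \<omega>)^(2*k) \<ge> a^(2*k)}"
  proof safe
    fix \<omega> assume "a < \<bar>Z \<omega>\<bar>"
    then have "a^(2*k) \<le> \<bar>Z \<omega>\<bar>^(2*k)" using a by (intro power_mono) auto
    then show "(Z \<omega>)^(2*k) \<ge> a^(2*k)" by (simp add: power_even_abs)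
  qed
  then have "measure M {\<omega>\<in>space M. a < \<bar>Z \<omega>\<bar>} \<le> measure M {\<omega>\<in>space M. (Z \<omega>)^(2*k) \<ge> a^(2*k)}"
    using Z by (intro finite_measure_mono) auto
  also have "\<dots> \<le> (\<integral>\<omega>. (Z \<omega>)^(2*k) \<partial>M) / a^(2*k)"
    by (rule integral_Markov_inequality_measure[OF int]) (use a in \<open>auto simp: zero_le_even_power\<close>)
  finally show ?thesis .
qed

lemma (in prob_space) AE_tendsto_zero_summable_tails:
  fixes Z :: "nat \<Rightarrow> 'a \<Rightarrow> real"
  assumes Z: "\<And>n. Z n \<in> borel_measurable M" and \<epsilon>: "\<epsilon> \<longlonglongrightarrow> 0"
    and sum: "summable (\<lambda>n. measure M {\<omega>\<in>space M. \<epsilon> n < \<bar>Z n \<omega>\<bar>})"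
  shows "AE \<omega> in M. (\<lambda>n. Z n \<omega>) \<longlonglongrightarrow> 0"
proof -
  define E where "E n = {\<omega>\<in>space M. \<epsilon> n < \<bar>Z n \<omega>\<bar>}" for n
  have E: "E n \<in> sets M" for n
  proof -
    have "(\<lambda>\<omega>. \<bar>Z n \<omega>\<bar>) \<in> borel_measurable M" using Z by (rule borel_measurable_abs)
    then show ?thesis unfolding borel_measurable_iff_greater E_def by blast
  qed
  have "AE \<omega> in M. eventually (\<lambda>n. \<omega> \<in> space M - E n) sequentially"
    by (rule borel_cantelli_AE1) (use E sum in \<open>auto simp: E_def less_top[symmetric]\<close>)
  then show ?thesis
  proof (rule AE_mp[OF _ AE_I2[OF impI]])
    fix \<omega> assume "\<omega> \<in> space M" and ev: "eventually (\<lambda>n. \<omega> \<in> space M - E n) sequentially"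
    from ev have "eventually (\<lambda>n. norm (Z n \<omega>) \<le> \<epsilon> n) sequentially"
      by eventually_elim (auto simp: E_def)
    then show "(\<lambda>n. Z n \<omega>) \<longlonglongrightarrow> 0" by (rule Lim_null_comparison[OF _ \<epsilon>])
  qed
qed


locale moment_bounded_process = prob_space M for M :: "'a measure" +
  fixes X :: "real \<Rightarrow> 'a \<Rightarrow> real" and T \<alpha> :: real
  assumes T: "T > 0" and \<alpha>: "\<alpha> > 0"
    and measurable: "\<And>t. t \<in> {0..T} \<Longrightarrow> X t \<in> borel_measurable M"
    and moments: "\<And>k. \<exists>C. \<forall>s\<in>{0..T}. \<forall>t\<in>{0..T}. integrable M (\<lambda>\<omega>. (X t \<omega> - X s \<omega>)^(2*k)) \<and>
                    (\<integral>\<omega>. (X t \<omega> - X s \<omega>)^(2*k) \<partial>M) \<le> C * (\<bar>t - s\<bar> powr \<alpha>)^k"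
begin

definition moment_const :: "nat \<Rightarrow> real" where
  "moment_const k = (SOME C. \<forall>s\<in>{0..T}. \<forall>t\<in>{0..T}. integrable M (\<lambda>\<omega>. (X t \<omega> - X s \<omega>)^(2*k)) \<and>
                      (\<integral>\<omega>. (X t \<omega> - X s \<omega>)^(2*k) \<partial>M) \<le> C * (\<bar>t - s\<bar> powr \<alpha>)^k)"

lemma moment_const:
  assumes "s \<in> {0..T}" "t \<in> {0..T}"
  shows "integrable M (\<lambda>\<omega>. (X t \<omega> - X s \<omega>)^(2*k))"
    and "(\<integral>\<omega>. (X t \<omega> - X s \<omega>)^(2*k) \<partial>M) \<le> moment_const k * (\<bar>t - s\<bar> powr \<alpha>)^k"
  using someI_ex[OF moments[of k]] assms unfolding moment_const_def by blast+

lemma moment_const_nonneg: "0 \<le> moment_const k"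
proof -
  have "0 \<le> (\<integral>\<omega>. (X T \<omega> - X 0 \<omega>)^(2*k) \<partial>M)"
    by (rule integral_nonneg_AE) (simp add: zero_le_even_power)
  also have "\<dots> \<le> moment_const k * (\<bar>T - 0\<bar> powr \<alpha>)^k" by (rule moment_const(2)) (use T in auto)
  finally have "0 \<le> moment_const k * (\<bar>T - 0\<bar> powr \<alpha>)^k" .
  moreover have "0 < (\<bar>T - 0\<bar> powr \<alpha>)^k" using T by simp
  ultimately show ?thesis by (simp add: zero_le_mult_iff)
qed

lemma increment_tail:
  assumes "s \<in> {0..T}" "t \<in> {0..T}" "0 < a"
  shows "measure M {\<omega>\<in>space M. a < \<bar>X t \<omega> - X s \<omega>\<bar>} \<le> moment_const k * (\<bar>t - s\<bar> powr \<alpha>)^k / a^(2*k)"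
proof -
  have "measure M {\<omega>\<in>space M. a < \<bar>X t \<omega> - X s \<omega>\<bar>} \<le> (\<integral>\<omega>. (X t \<omega> - X s \<omega>)^(2*k) \<partial>M) / a^(2*k)"
    by (rule even_moment_tail_bound) (use assms measurable moment_const(1) in auto)
  also have "\<dots> \<le> moment_const k * (\<bar>t - s\<bar> powr \<alpha>)^k / a^(2*k)"
    using moment_const(2)[OF assms(1,2)] assms(3) by (intro divide_right_mono) auto
  finally show ?thesis .
qed

text \<open>Using \<open>k = m + 1\<close> moments, dyadic increments of level \<open>n\<close> exceed \<open>2\<^sup>-\<^sup>\<gamma>\<^sup>n\<close>,
  \<open>\<gamma> = \<alpha>/2 - 1/(m+1)\<close>, only with probability \<open>O(2\<^sup>-\<^sup>n)\<close>.\<close>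

definition grid_exponent :: "nat \<Rightarrow> real" where
  "grid_exponent m = \<alpha>/2 - 1 / real (Suc m)"

definition large_grid_increment :: "nat \<Rightarrow> nat \<Rightarrow> 'a set" where
  "large_grid_increment m n = (\<Union>i\<in>{..<(2::nat)^n}. {\<omega>\<in>space M.
      2 powr (- grid_exponent m * n) < \<bar>X (T * (real i + 1) / 2^n) \<omega> - X (T * real i / 2^n) \<omega>\<bar>})"

lemma grid_increment_event_sets:
  assumes "i < (2::nat)^n"
  shows "{\<omega>\<in>space M. c < \<bar>X (T * (real i + 1) / 2^n) \<omega> - X (T * real i / 2^n) \<omega>\<bar>} \<in> sets M"
proof -
  have "(\<lambda>\<omega>. \<bar>X (T * (real i + 1) / 2^n) \<omega> - X (T * real i / 2^n) \<omega>\<bar>) \<in> borel_measurable M"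
    using measurable dyadic_grid_point[OF T assms] by (intro borel_measurable_abs borel_measurable_diff) auto
  then show ?thesis unfolding borel_measurable_iff_greater by blast
qed

lemma large_grid_increment_sets[measurable]: "large_grid_increment m n \<in> sets M"
  unfolding large_grid_increment_def by (intro sets.finite_UN grid_increment_event_sets) auto

lemma large_grid_increment_measure:
  "measure M (large_grid_increment m n) \<le> moment_const (Suc m) * T powr (\<alpha> * Suc m) * (1/2)^n"
proof -
  define k where "k = Suc m"
  define c where "c = (2::real) powr (- grid_exponent m * n)"
  have "measure M (large_grid_increment m n)
      \<le> (\<Sum>i<(2::nat)^n. measure M {\<omega>\<in>space M. c < \<bar>X (T * (real i + 1) / 2^n) \<omega> - X (T * real i / 2^n) \<omega>\<bar>})"
    unfolding large_grid_increment_def c_def by (intro measure_UNION_le grid_increment_event_sets) auto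
  also have "\<dots> \<le> (\<Sum>i<(2::nat)^n. moment_const k * ((T / 2^n) powr \<alpha>)^k / c^(2*k))"
  proof (rule sum_mono)
    fix i assume "i \<in> {..<(2::nat)^n}"
    then have i: "i < 2^n" by simp
    have "\<bar>T * (real i + 1) / 2^n - T * real i / 2^n\<bar> = T / 2^n" using T by (simp add: field_simps)
    then show "measure M {\<omega>\<in>space M. c < \<bar>X (T * (real i + 1) / 2^n) \<omega> - X (T * real i / 2^n) \<omega>\<bar>}
        \<le> moment_const k * ((T / 2^n) powr \<alpha>)^k / c^(2*k)"
      using increment_tail[OF dyadic_grid_point[OF T i], of c k] by (simp add: c_def)
  qed
  also have "\<dots> = moment_const k * (2^n * ((T / 2^n) powr \<alpha>)^k / c^(2*k))" by simp
  also have "2^n * ((T / 2^n) powr \<alpha>)^k / c^(2*k) = T powr (\<alpha> * k) * (1/2)^n"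
    unfolding c_def grid_exponent_def k_def by (rule grid_union_bound_arithmetic[OF T]) simp
  finally show ?thesis by (simp add: k_def mult_ac)
qed

text \<open>The good paths: for each \<open>m\<close>, only finitely many levels have a large increment.
  By Borel--Cantelli almost every path is good.\<close>

definition good_paths :: "'a set" where
  "good_paths = {\<omega>\<in>space M. \<forall>m. \<exists>N. \<forall>n\<ge>N. \<omega> \<notin> large_grid_increment m n}"

lemma good_paths_sets: "good_paths \<in> sets M"
proof -
  have "good_paths = space M - (\<Union>m. \<Inter>N. \<Union>n\<in>{N..}. large_grid_increment m n)"
    unfolding good_paths_def atLeast_def by blast
  also have "\<dots> \<in> sets M" by measurable
  finally show ?thesis .
qed

lemma good_paths_AE: "AE \<omega> in M. \<omega> \<in> good_paths"
proof -
  have "AE \<omega> in M. eventually (\<lambda>n. \<omega> \<in> space M - large_grid_increment m n) sequentially" for m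
  proof (rule borel_cantelli_AE1)
    show "summable (\<lambda>n. measure M (large_grid_increment m n))"
    proof (rule summable_comparison_test')
      show "summable (\<lambda>n. moment_const (Suc m) * T powr (\<alpha> * Suc m) * (1/2)^n)"
        by (intro summable_mult summable_geometric) simp
      show "norm (measure M (large_grid_increment m n)) \<le> moment_const (Suc m) * T powr (\<alpha> * Suc m) * (1/2)^n"
        for n using large_grid_increment_measure[of m n] by simp
    qed
  qed (auto simp: less_top[symmetric])
  then have "AE \<omega> in M. \<forall>m. eventually (\<lambda>n. \<omega> \<in> space M - large_grid_increment m n) sequentially"
    by (simp add: AE_all_countable)
  then show ?thesis
    by (rule AE_mp[OF _ AE_I2[OF impI]]) (auto simp: good_paths_def eventually_sequentially)
qed

lemma good_path_dyadic_chain: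
  assumes \<omega>: "\<omega> \<in> good_paths" and \<gamma>: "0 < grid_exponent m"
  shows "\<exists>N. dyadic_chain (\<lambda>t. X t \<omega>) T ((1/2) powr grid_exponent m) N"
proof -
  obtain N where N: "\<forall>n\<ge>N. \<omega> \<notin> large_grid_increment m n" using \<omega> unfolding good_paths_def by blast
  have q: "((1/2::real) powr grid_exponent m)^n = 2 powr (- grid_exponent m * n)" for n
    by (simp add: powr_power[symmetric] powr_divide powr_minus_divide power_one_over mult_ac)
  have "dyadic_chain (\<lambda>t. X t \<omega>) T ((1/2) powr grid_exponent m) N"
  proof
    show "T > 0" by (rule T)
    show "0 < (1/2::real) powr grid_exponent m" by simp
    show "(1/2::real) powr grid_exponent m < 1"
      using powr_less_mono2[of "grid_exponent m" "1/2" 1] \<gamma> by simp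
    fix n i assume "N \<le> n" and i: "i < (2::nat)^n"
    then have "\<omega> \<notin> large_grid_increment m n" using N by blast
    then show "\<bar>X (T * (real i + 1) / 2^n) \<omega> - X (T * real i / 2^n) \<omega>\<bar> \<le> ((1/2) powr grid_exponent m)^n"
      using \<omega> i unfolding large_grid_increment_def good_paths_def q by (auto simp: not_less)
  qed
  then show ?thesis ..
qed


definition dyadic_version :: "real \<Rightarrow> 'a \<Rightarrow> real" where
  "dyadic_version t \<omega> = (if \<omega> \<in> good_paths then lim (\<lambda>n. X (dyadic_floor T n t) \<omega>) else 0)"

lemma dyadic_version_measurable:
  assumes t: "t \<in> {0..T}"
  shows "dyadic_version t \<in> borel_measurable M"
proof -
  have "X (dyadic_floor T n t) \<in> borel_measurable M" for n
    by (rule measurable[OF dyadic_floor_approx(1)[OF T t]])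
  then have "(\<lambda>\<omega>. lim (\<lambda>n. X (dyadic_floor T n t) \<omega>)) \<in> borel_measurable M"
    by (rule borel_measurable_lim_metric)
  then show ?thesis unfolding dyadic_version_def
    by (rule measurable_If_set) (use good_paths_sets in auto)
qed

text \<open>The dyadic approximations converge almost surely: with one moment,
  \<open>P(|X(t\<^sub>n) - X t| > 2\<^sup>-\<^sup>\<alpha>\<^sup>n\<^sup>/\<^sup>4) \<le> C T\<^sup>\<alpha> 2\<^sup>-\<^sup>\<alpha>\<^sup>n\<^sup>/\<^sup>2\<close> is summable.\<close>

lemma dyadic_approx_AE:
  assumes t: "t \<in> {0..T}"
  shows "AE \<omega> in M. (\<lambda>n. X (dyadic_floor T n t) \<omega>) \<longlonglongrightarrow> X t \<omega>"
proof -
  define \<epsilon> where "\<epsilon> n = (2::real) powr (- (\<alpha>/4) * n)" for n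
  define \<rho> where "\<rho> = (2::real) powr (- (\<alpha>/2))"
  have \<rho>: "0 < \<rho>" "\<rho> < 1" using \<alpha> by (auto simp: \<rho>_def intro: powr_less_one)
  have tail: "measure M {\<omega>\<in>space M. \<epsilon> n < \<bar>X (dyadic_floor T n t) \<omega> - X t \<omega>\<bar>}
      \<le> moment_const 1 * T powr \<alpha> * \<rho>^n" for n
  proof -
    have "measure M {\<omega>\<in>space M. \<epsilon> n < \<bar>X (dyadic_floor T n t) \<omega> - X t \<omega>\<bar>}
        \<le> moment_const 1 * \<bar>dyadic_floor T n t - t\<bar> powr \<alpha> / (\<epsilon> n)^2"
      using increment_tail[OF t dyadic_floor_approx(1)[OF T t, of n], of "\<epsilon> n" 1] by (simp add: \<epsilon>_def)
    also have "\<dots> \<le> moment_const 1 * (T / 2^n) powr \<alpha> / (\<epsilon> n)^2"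
      using dyadic_floor_approx(2)[OF T t, of n] moment_const_nonneg[of 1] \<alpha>
      by (intro divide_right_mono mult_left_mono powr_mono2) auto
    also have "\<dots> = moment_const 1 * T powr \<alpha> * \<rho>^n"
      using version_tail_arithmetic[OF T, where \<alpha>=\<alpha> and n=n]
      by (simp add: \<epsilon>_def \<rho>_def flip: times_divide_eq_right)
    finally show ?thesis .
  qed
  have "AE \<omega> in M. (\<lambda>n. X (dyadic_floor T n t) \<omega> - X t \<omega>) \<longlonglongrightarrow> 0"
  proof (rule AE_tendsto_zero_summable_tails)
    show "(\<lambda>\<omega>. X (dyadic_floor T n t) \<omega> - X t \<omega>) \<in> borel_measurable M" for n
      using measurable[OF dyadic_floor_approx(1)[OF T t]] measurable[OF t] by simp
    have "(\<lambda>n. (2 powr (- (\<alpha>/4)))^n) \<longlonglongrightarrow> 0" using \<alpha> by (intro LIMSEQ_power_zero) (auto intro: powr_less_one)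
    then show "\<epsilon> \<longlonglongrightarrow> 0" by (simp add: \<epsilon>_def powr_power mult_ac)
    show "summable (\<lambda>n. measure M {\<omega>\<in>space M. \<epsilon> n < \<bar>X (dyadic_floor T n t) \<omega> - X t \<omega>\<bar>})"
      by (rule summable_comparison_test'[where N=0, OF summable_mult[OF summable_geometric]])
        (use \<rho> tail in auto)
  qed
  then show ?thesis by (simp add: LIM_zero_iff)
qed

lemma dyadic_version_AE:
  assumes t: "t \<in> {0..T}"
  shows "AE \<omega> in M. X t \<omega> = dyadic_version t \<omega>"
  using dyadic_approx_AE[OF t] good_paths_AE
  by eventually_elim (auto simp: dyadic_version_def limI)

text \<open>Every path of the version is Hoelder of each order \<open>\<delta> < \<alpha>/2\<close>: pick \<open>m\<close> with
  \<open>\<delta> \<le> grid_exponent m\<close> and apply the chaining lemma on good paths.\<close>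

lemma dyadic_version_holder:
  assumes \<delta>: "0 < \<delta>" "\<delta> < \<alpha>/2"
  shows "holder_on T \<delta> (\<lambda>t. dyadic_version t \<omega>)"
proof (cases "\<omega> \<in> good_paths")
  case False
  then show ?thesis unfolding holder_on_def dyadic_version_def by (intro exI[of _ 0]) simp
next
  case True
  obtain m :: nat where "1 / (\<alpha>/2 - \<delta>) < real m" using reals_Archimedean2 by blast
  then have "1 / (\<alpha>/2 - \<delta>) < real (Suc m)" by simp
  then have "1 / real (Suc m) < \<alpha>/2 - \<delta>" using \<delta> by (simp add: field_simps)
  then have \<delta>m: "\<delta> \<le> grid_exponent m" by (simp add: grid_exponent_def)
  then obtain N where "dyadic_chain (\<lambda>t. X t \<omega>) T ((1/2) powr grid_exponent m) N"
    using good_path_dyadic_chain[OF True] \<delta> by force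
  then interpret chain: dyadic_chain "\<lambda>t. X t \<omega>" T "(1/2) powr grid_exponent m" N .
  obtain K where "\<forall>s\<in>{0..T}. \<forall>t\<in>{0..T}. \<bar>chain.chain_limit t - chain.chain_limit s\<bar> \<le> K * \<bar>t - s\<bar> powr grid_exponent m"
    using chain.chain_limit_holder \<delta> \<delta>m by force
  moreover have "dyadic_version t \<omega> = chain.chain_limit t" for t
    using True by (simp add: dyadic_version_def chain.chain_limit_def)
  ultimately show ?thesis using holder_on_smaller_exponent[OF T \<delta>(1) \<delta>m] by simp
qed

theorem holder_version:
  "\<exists>X'. is_version M T X X' \<and> (\<forall>\<omega>\<in>space M. \<forall>\<delta>. 0 < \<delta> \<and> \<delta> < \<alpha>/2 \<longrightarrow> holder_on T \<delta> (\<lambda>t. X' t \<omega>))"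
  unfolding is_version_def
  using dyadic_version_measurable dyadic_version_AE dyadic_version_holder by blast

end

text \<open>Regularity of a centered Gaussian process whose increment variance is bounded by
  \<open>C |t - s|\<^sup>\<alpha>\<close>: its second moments inherit the bound, and all even moments are
  \<open>O(|t - s|\<^sup>\<alpha>\<^sup>k)\<close>, so Kolmogorov--Chentsov yields a version with Hoelder paths of every
  order \<open>\<delta> < \<alpha>/2\<close>.\<close>

lemma gaussian_process_regularity:
  assumes P: "prob_space M" and T: "T > 0" and \<alpha>: "\<alpha> > 0"
    and cgp: "centered_gaussian_process M T X R" and sym: "\<And>a c. R a c = R c a"
    and bound: "\<forall>s\<in>{0..T}. \<forall>t\<in>{0..T}. incr_var R s t \<le> C * \<bar>t - s\<bar> powr \<alpha>"
  shows "\<forall>s\<in>{0..T}. \<forall>t\<in>{0..T}. (\<integral>\<omega>. \<bar>X t \<omega> - X s \<omega>\<bar>^2 \<partial>M) \<le> C * \<bar>t - s\<bar> powr \<alpha>"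
    and "\<exists>X'. is_version M T X X' \<and>
           (\<forall>\<omega>\<in>space M. \<forall>\<delta>. 0 < \<delta> \<and> \<delta> < \<alpha>/2 \<longrightarrow> holder_on T \<delta> (\<lambda>t. X' t \<omega>))"
proof -
  show "\<forall>s\<in>{0..T}. \<forall>t\<in>{0..T}. (\<integral>\<omega>. \<bar>X t \<omega> - X s \<omega>\<bar>^2 \<partial>M) \<le> C * \<bar>t - s\<bar> powr \<alpha>"
    using gaussian_increment_moment(2)[OF P cgp sym, of _ _ 1] bound by simp
  have "moment_bounded_process M X T \<alpha>"
  proof (rule moment_bounded_process.intro[OF P], rule moment_bounded_process_axioms.intro)
    show "T > 0" "\<alpha> > 0" by (fact T, fact \<alpha>)
    show "X t \<in> borel_measurable M" if "t \<in> {0..T}" for t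
      using cgp that unfolding centered_gaussian_process_def by blast
    fix k :: nat
    define c :: real where "c = fact (2*k) / (2^k * fact k)"
    show "\<exists>C'. \<forall>s\<in>{0..T}. \<forall>t\<in>{0..T}. integrable M (\<lambda>\<omega>. (X t \<omega> - X s \<omega>)^(2*k)) \<and>
                   (\<integral>\<omega>. (X t \<omega> - X s \<omega>)^(2*k) \<partial>M) \<le> C' * (\<bar>t - s\<bar> powr \<alpha>)^k"
    proof (intro exI[of _ "c * C^k"] ballI conjI)
      fix s t assume st: "s \<in> {0..T}" "t \<in> {0..T}"
      show "integrable M (\<lambda>\<omega>. (X t \<omega> - X s \<omega>)^(2*k))"
        by (rule gaussian_increment_moment(1)[OF P cgp sym st])
      have "(\<integral>\<omega>. (X t \<omega> - X s \<omega>)^(2*k) \<partial>M) = c * incr_var R s t ^ k"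
        unfolding c_def by (rule gaussian_increment_moment(2)[OF P cgp sym st])
      also have "\<dots> \<le> c * (C * \<bar>t - s\<bar> powr \<alpha>)^k"
        using gaussian_increment(1)[OF cgp sym st] bound st
        by (intro mult_left_mono power_mono) (auto simp: c_def)
      finally show "(\<integral>\<omega>. (X t \<omega> - X s \<omega>)^(2*k) \<partial>M) \<le> c * C^k * (\<bar>t - s\<bar> powr \<alpha>)^k"
        by (simp add: power_mult_distrib mult_ac)
    qed
  qed
  then show "\<exists>X'. is_version M T X X' \<and>
           (\<forall>\<omega>\<in>space M. \<forall>\<delta>. 0 < \<delta> \<and> \<delta> < \<alpha>/2 \<longrightarrow> holder_on T \<delta> (\<lambda>t. X' t \<omega>))"
    by (rule moment_bounded_process.holder_version)
qed

theorem proposition3p2: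
  fixes M :: "'a measure" and X Y :: "real \<Rightarrow> 'a \<Rightarrow> real" and H T :: real
  assumes "prob_space M"
    and "1/2 < H" and "H < 1" and "T > 0"
    and "centered_gaussian_process M T X (RX H)"
    and "centered_gaussian_process M T Y (RY H)"
  shows "(\<exists>C>0. \<forall>s\<in>{0..T}. \<forall>t\<in>{0..T}.
            (\<integral>\<omega>. \<bar>X t \<omega> - X s \<omega>\<bar>^2 \<partial>M) \<le> C * \<bar>t - s\<bar> powr (1/2) \<and>
            (\<integral>\<omega>. \<bar>Y t \<omega> - Y s \<omega>\<bar>^2 \<partial>M) \<le> C * \<bar>t - s\<bar> powr (1/2))
       \<and> (\<exists>X'. is_version M T X X' \<and>
            (\<forall>\<omega>\<in>space M. \<forall>\<delta>. 0 < \<delta> \<and> \<delta> < 1/4 \<longrightarrow> holder_on T \<delta> (\<lambda>t. X' t \<omega>)))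
       \<and> (\<exists>Y'. is_version M T Y Y' \<and>
            (\<forall>\<omega>\<in>space M. \<forall>\<delta>. 0 < \<delta> \<and> \<delta> < 1/4 \<longrightarrow> holder_on T \<delta> (\<lambda>t. Y' t \<omega>)))"
proof -
  note P = assms(1) and H = assms(2,3) and T = assms(4)
  obtain CX CY where CX: "CX \<ge> 0" "\<forall>s\<in>{0..T}. \<forall>t\<in>{0..T}. incr_var (RX H) s t \<le> CX * \<bar>t - s\<bar> powr (1/2)"
    and CY: "CY \<ge> 0" "\<forall>s\<in>{0..T}. \<forall>t\<in>{0..T}. incr_var (RY H) s t \<le> CY * \<bar>t - s\<bar> powr (1/2)"
    using RX_incr_var_bound[OF H] RY_incr_var_bound[OF H] by blast
  have half: "(0::real) < 1/2" and quarter: "(1/2::real) / 2 = 1/4" by simp_all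
  note X = gaussian_process_regularity[OF P T half assms(5) RX_symmetric CX(2), unfolded quarter]
  note Y = gaussian_process_regularity[OF P T half assms(6) RY_symmetric CY(2), unfolded quarter]
  have "(\<integral>\<omega>. \<bar>X t \<omega> - X s \<omega>\<bar>^2 \<partial>M) \<le> (CX + CY + 1) * \<bar>t - s\<bar> powr (1/2) \<and>
      (\<integral>\<omega>. \<bar>Y t \<omega> - Y s \<omega>\<bar>^2 \<partial>M) \<le> (CX + CY + 1) * \<bar>t - s\<bar> powr (1/2)"
    if st: "s \<in> {0..T}" "t \<in> {0..T}" for s t
  proof -
    have "CX * \<bar>t - s\<bar> powr (1/2) \<le> (CX + CY + 1) * \<bar>t - s\<bar> powr (1/2)"
      "CY * \<bar>t - s\<bar> powr (1/2) \<le> (CX + CY + 1) * \<bar>t - s\<bar> powr (1/2)"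
      using CX(1) CY(1) by (intro mult_right_mono; simp)+
    then show ?thesis using X(1) Y(1) st by fastforce
  qed
  moreover have "CX + CY + 1 > 0" using CX(1) CY(1) by simp
  ultimately show ?thesis using X(2) Y(2) by blast
qed

end
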